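(* Consider the Krasovskii-regularized Lur'e system $\dot x\in F(x)$, $y=Cx$, of the context, and suppose Assumptions 1 and 3 hold. Then the system is output finite-time stable (OFTS) and state-independent output locally asymptotically stable (SIoLAS).
   Context: System: $\dot x=Ax+Bu$, $y=Cx$, $u=-\boldsymbol\psi(y)$, $x\in\mathbb{R}^n$, $u,y\in\mathbb{R}^p$, $\boldsymbol\psi(y)=(\psi_1(y_1),\dots,\psi_p(y_p))$. Piecewise continuous: finitely many discontinuities on each bounded interval, continuous between them, finite one-sided limits. Krasovskii regularization: $\boldsymbol\Psi_i(s):=\bigcap_{\delta>0}\overline{\mathrm{co}}\,\psi_i(s+\delta[-1,1])$, $\boldsymbol\Psi(y):=\boldsymbol\Psi_1(y_1)\times\dots\times\boldsymbol\Psi_p(y_p)$, $F(x):=\{Ax-Bw:w\in\boldsymbol\Psi(Cx)\}$; solutions are absolutely continuous functions satisfying $\dot x(t)\in F(x(t))$ a.e., with output $y=Cx$. Assumption 1: for each $i$, $\psi_i$ is piecewise continuous and there is $\zeta_i\in(0,+\infty]$ with $\psi_i(s)(\psi_i(s)-\zeta_is)\le0$ for all $s$ (for $\zeta_i=+\infty$: $\psi_i(s)s\ge0$). Assumption 3: (i) $CB$ is Lyapunov diagonally stable, i.e., there is a diagonal $\overline\Gamma>0$ with $\overline\Gamma CB+(CB)^\top\overline\Gamma>0$; (ii) the origin is globally asymptotically stable for $\dot x\in F(x)$ (all maximal solutions defined on $\mathbb{R}_{\ge0}$ and there is $\beta\in\mathcal{KL}$ with $|x(t)|\le\beta(|x(0)|,t)$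 for all solutions and $t\ge0$); (iii) for each $i$, $\lim_{s\to0^+}\psi_i(s)>0$ and $\lim_{s\to0^-}\psi_i(s)<0$. Definitions (all solutions forward complete): oGAS if there is $\beta\in\mathcal{KL}$ with $|y(t)|\le\beta(|x(0)|,t)$ for all solutions and $t\ge0$; SIoLAS if there are $r>0$ and $\beta\in\mathcal{KL}$ such that every solution with $|x(0)|<r$ satisfies $|y(t)|\le\beta(|y(0)|,t)$ for all $t\ge0$; OFTS if oGAS and for each solution there is $T\in[0,\infty)$ with $y(t)=0$ for all $t\ge T$. *)

theory Defs
  imports "HOL-Analysis.Analysis"
begin

definition piecewise_continuous :: "(real \<Rightarrow> real) \<Rightarrow> bool" where
  "piecewise_continuous f \<longleftrightarrow>
     (\<forall>a b. finite {s \<in> {a..b}. \<not> isCont f s}) \<and>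
     (\<forall>s. \<exists>l. (f \<longlongrightarrow> l) (at_left s)) \<and>
     (\<forall>s. \<exists>l. (f \<longlongrightarrow> l) (at_right s))"

definition krasovskii :: "(real \<Rightarrow> real) \<Rightarrow> real \<Rightarrow> real set" where
  "krasovskii f s = (\<Inter>\<delta>\<in>{0<..}. closure (convex hull (f ` {s - \<delta>..s + \<delta>})))"

definition Psi_set :: "('p::finite \<Rightarrow> real \<Rightarrow> real) \<Rightarrow> real^'p \<Rightarrow> (real^'p) set" where
  "Psi_set \<psi> y = {w. \<forall>i. w $ i \<in> krasovskii (\<psi> i) (y $ i)}"

definition lure_F ::
  "real^'n^'n \<Rightarrow> real^'p^'n \<Rightarrow> real^'n^'p \<Rightarrow> ('p::finite \<Rightarrow> real \<Rightarrow> real)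
     \<Rightarrow> real^'n::finite \<Rightarrow> (real^'n) set" where
  "lure_F A B C \<psi> x = {A *v x - B *v w | w. w \<in> Psi_set \<psi> (C *v x)}"

definition abs_continuous_on :: "real set \<Rightarrow> (real \<Rightarrow> 'a::real_normed_vector) \<Rightarrow> bool" where
  "abs_continuous_on S f \<longleftrightarrow>
     (\<forall>\<epsilon>>0. \<exists>\<delta>>0. \<forall>(n::nat) (u::nat \<Rightarrow> real) v.
        (\<forall>k<n. u k \<in> S \<and> v k \<in> S \<and> u k \<le> v k) \<and>
        (\<forall>k. Suc k < n \<longrightarrow> v k \<le> u (Suc k)) \<and>
        (\<Sum>k<n. v k - u k) < \<delta>
        \<longrightarrow> (\<Sum>k<n. norm (f (v k) - f (u k))) < \<epsilon>)"

definition is_solution :: "('a::euclidean_space \<Rightarrow> 'a set) \<Rightarrow> (real \<Rightarrow> 'a) \<Rightarrow> real set \<Rightarrow> bool" where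
  "is_solution F x I \<longleftrightarrow>
     is_interval I \<and> 0 \<in> I \<and> I \<subseteq> {0..} \<and>
     (\<forall>a b. {a..b} \<subseteq> I \<longrightarrow> abs_continuous_on {a..b} x) \<and>
     (\<exists>N. negligible N \<and>
        (\<forall>t \<in> I - N. \<exists>v. (x has_vector_derivative v) (at t within I) \<and> v \<in> F (x t)))"

definition is_maximal_solution :: "('a::euclidean_space \<Rightarrow> 'a set) \<Rightarrow> (real \<Rightarrow> 'a) \<Rightarrow> real set \<Rightarrow> bool" where
  "is_maximal_solution F x I \<longleftrightarrow> is_solution F x I \<and>
     (\<forall>z J. is_solution F z J \<and> I \<subseteq> J \<and> (\<forall>t\<in>I. z t = x t) \<longrightarrow> J = I)"

definition forward_complete :: "('a::euclidean_space \<Rightarrow> 'a set) \<Rightarrow> bool" where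
  "forward_complete F \<longleftrightarrow> (\<forall>x I. is_maximal_solution F x I \<longrightarrow> I = {0..})"

definition class_K :: "(real \<Rightarrow> real) \<Rightarrow> bool" where
  "class_K \<alpha> \<longleftrightarrow> continuous_on {0..} \<alpha> \<and> strict_mono_on {0..} \<alpha> \<and> \<alpha> 0 = 0"

definition class_KL :: "(real \<Rightarrow> real \<Rightarrow> real) \<Rightarrow> bool" where
  "class_KL \<beta> \<longleftrightarrow>
     (\<forall>t\<ge>0. class_K (\<lambda>r. \<beta> r t)) \<and>
     (\<forall>r\<ge>0. antimono_on {0..} (\<lambda>t. \<beta> r t) \<and> ((\<lambda>t. \<beta> r t) \<longlongrightarrow> 0) at_top)"

definition GAS :: "('a::euclidean_space \<Rightarrow> 'a set) \<Rightarrow> bool" where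
  "GAS F \<longleftrightarrow> forward_complete F \<and>
     (\<exists>\<beta>. class_KL \<beta> \<and> (\<forall>x I t. is_solution F x I \<and> t \<in> I \<longrightarrow> norm (x t) \<le> \<beta> (norm (x 0)) t))"

definition oGAS :: "('a::euclidean_space \<Rightarrow> 'a set) \<Rightarrow> ('a \<Rightarrow> 'b::real_normed_vector) \<Rightarrow> bool" where
  "oGAS F h \<longleftrightarrow> forward_complete F \<and>
     (\<exists>\<beta>. class_KL \<beta> \<and> (\<forall>x I t. is_solution F x I \<and> t \<in> I \<longrightarrow> norm (h (x t)) \<le> \<beta> (norm (x 0)) t))"

definition SIoLAS :: "('a::euclidean_space \<Rightarrow> 'a set) \<Rightarrow> ('a \<Rightarrow> 'b::real_normed_vector) \<Rightarrow> bool" where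
  "SIoLAS F h \<longleftrightarrow> forward_complete F \<and>
     (\<exists>r>0. \<exists>\<beta>. class_KL \<beta> \<and>
        (\<forall>x I t. is_solution F x I \<and> norm (x 0) < r \<and> t \<in> I \<longrightarrow> norm (h (x t)) \<le> \<beta> (norm (h (x 0))) t))"

definition OFTS :: "('a::euclidean_space \<Rightarrow> 'a set) \<Rightarrow> ('a \<Rightarrow> 'b::real_normed_vector) \<Rightarrow> bool" where
  "OFTS F h \<longleftrightarrow> oGAS F h \<and>
     (\<forall>x I. is_solution F x I \<longrightarrow> (\<exists>T\<ge>0. \<forall>t\<in>I. T \<le> t \<longrightarrow> h (x t) = 0))"

definition diag_mat :: "('p::finite \<Rightarrow> real) \<Rightarrow> real^'p^'p" where
  "diag_mat d = (\<chi> i j. if i = j then d i else 0)"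

definition pos_def_mat :: "real^'p^'p \<Rightarrow> bool" where
  "pos_def_mat M \<longleftrightarrow> (\<forall>v. v \<noteq> 0 \<longrightarrow> v \<bullet> (M *v v) > 0)"

definition lyap_diag_stable :: "real^'p::finite^'p \<Rightarrow> bool" where
  "lyap_diag_stable M \<longleftrightarrow>
     (\<exists>d. (\<forall>i. d i > 0) \<and> pos_def_mat (diag_mat d ** M + transpose M ** diag_mat d))"

end

theory Submission
  imports Defs
begin

(*
  Let s_i(r) be the right limit of psi_i at 0 for r >= 0 and its left limit for r < 0, and let
  V(y) = sum_i gamma_i s_i(y_i) y_i, a weighted l1-type norm with the diagonal weights gamma of
  the Lyapunov diagonal stability of CB.  Near the origin the regularized input w is close to
  the vector u = (s_i(y_i))_i, so along solutions (where components y_i = 0 have zero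
  derivative almost everywhere) dV/dt = <Gamma u, CAx - CBw> <= -m |u|^2 + small terms, which is
  bounded by a negative constant -c as long as y /= 0 and x stays in a small ball.  Since V is
  absolutely continuous along solutions, it decreases at rate c until it vanishes.  Global
  asymptotic stability of the state brings every solution into the ball after some time, which
  gives finite-time convergence of y, and keeps solutions starting near the origin inside it,
  which together with |y| ~ V gives the state-independent estimate.
*)

section \<open>Absolutely continuous functions with nonpositive derivative\<close>

lemma has_real_derivative_linear_approx:
  fixes f :: "real \<Rightarrow> real"
  assumes "(f has_real_derivative D) (at t)" "e > 0"
  obtains r where "r > 0" "\<And>s. \<bar>s - t\<bar> < r \<Longrightarrow> \<bar>f s - f t - D * (s - t)\<bar> \<le> e * \<bar>s - t\<bar>"
proof -
  have "(f has_derivative (*) D) (at t)"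
    using assms(1) by (simp add: has_field_derivative_def)
  then obtain r where "r > 0" "\<forall>s. norm (s - t) < r \<longrightarrow> norm (f s - f t - D * (s - t)) \<le> e * norm (s - t)"
    using assms(2) unfolding has_derivative_at_alt by blast
  then show ?thesis using that by auto
qed

lemma nonpos_derivative_straddle:
  fixes f :: "real \<Rightarrow> real"
  assumes "(f has_real_derivative D) (at t)" "D \<le> 0" "e > 0"
  obtains r where "r > 0"
    "\<And>u v. u \<le> t \<Longrightarrow> t \<le> v \<Longrightarrow> t - u < r \<Longrightarrow> v - t < r \<Longrightarrow> f v - f u \<le> e * (v - u)"
proof -
  obtain r where r: "r > 0" "\<And>s. \<bar>s - t\<bar> < r \<Longrightarrow> \<bar>f s - f t - D * (s - t)\<bar> \<le> e * \<bar>s - t\<bar>"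
    using has_real_derivative_linear_approx[OF assms(1,3)] by blast
  have "f v - f u \<le> e * (v - u)" if "u \<le> t" "t \<le> v" "t - u < r" "v - t < r" for u v
  proof -
    have "f v - f t \<le> e * (v - t)"
      using r(2)[of v] that assms(2) mult_nonpos_nonneg[of D "v - t"] by auto
    moreover have "f t - f u \<le> e * (t - u)"
      using r(2)[of u] that assms(2) mult_nonpos_nonpos[of D "u - t"] by auto
    ultimately show ?thesis by (simp add: algebra_simps)
  qed
  with r(1) show ?thesis using that by blast
qed

lemma abs_continuous_on_imp_continuous_on:
  fixes f :: "real \<Rightarrow> 'a::real_normed_vector"
  assumes "abs_continuous_on {a..b} f"
  shows "continuous_on {a..b} f"
  unfolding continuous_on_iff
proof (intro ballI allI impI)
  fix x e assume x: "x \<in> {a..b}" and "(e::real) > 0"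
  then obtain \<delta> where "\<delta> > 0" and ac: "\<forall>(n::nat) (u::nat \<Rightarrow> real) v.
      (\<forall>k<n. u k \<in> {a..b} \<and> v k \<in> {a..b} \<and> u k \<le> v k) \<and> (\<forall>k. Suc k < n \<longrightarrow> v k \<le> u (Suc k)) \<and>
      (\<Sum>k<n. v k - u k) < \<delta> \<longrightarrow> (\<Sum>k<n. norm (f (v k) - f (u k))) < e"
    using assms unfolding abs_continuous_on_def by blast
  have "dist (f x') (f x) < e" if "x' \<in> {a..b}" "dist x' x < \<delta>" for x'
  proof -
    have "norm (f (max x x') - f (min x x')) < e"
      using ac[rule_format, of 1 "\<lambda>_. min x x'" "\<lambda>_. max x x'"] x that
      by (cases "x \<le> x'") (auto simp: dist_real_def max_def min_def)
    then show ?thesis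
      by (cases "x \<le> x'") (auto simp: max_def min_def dist_norm norm_minus_commute)
  qed
  with \<open>\<delta> > 0\<close> show "\<exists>d>0. \<forall>x'\<in>{a..b}. dist x' x < d \<longrightarrow> dist (f x') (f x) < e" by blast
qed

lemma abs_continuous_on_dominated:
  fixes f :: "real \<Rightarrow> 'a::real_normed_vector" and h :: "real \<Rightarrow> 'b::real_normed_vector"
  assumes ac: "abs_continuous_on S f" and "L \<ge> 0" "c \<ge> 0"
    and dom: "\<And>u v. u \<in> S \<Longrightarrow> v \<in> S \<Longrightarrow> u \<le> v \<Longrightarrow> norm (h v - h u) \<le> L * norm (f v - f u) + c * (v - u)"
  shows "abs_continuous_on S h"
  unfolding abs_continuous_on_def
proof (intro allI impI)
  fix e :: real assume "e > 0"
  then have "e / (2 * (L + 1)) > 0" using \<open>L \<ge> 0\<close> by simp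
  then obtain \<delta>1 where "\<delta>1 > 0" and acf: "\<forall>(n::nat) (u::nat \<Rightarrow> real) v.
      (\<forall>k<n. u k \<in> S \<and> v k \<in> S \<and> u k \<le> v k) \<and> (\<forall>k. Suc k < n \<longrightarrow> v k \<le> u (Suc k)) \<and>
      (\<Sum>k<n. v k - u k) < \<delta>1 \<longrightarrow> (\<Sum>k<n. norm (f (v k) - f (u k))) < e / (2 * (L + 1))"
    using ac unfolding abs_continuous_on_def by blast
  define \<delta> where "\<delta> = min \<delta>1 (e / (2 * (c + 1)))"
  have "(\<Sum>k<n. norm (h (v k) - h (u k))) < e"
    if uv: "\<forall>k<n. u k \<in> S \<and> v k \<in> S \<and> u k \<le> v k" "\<forall>k. Suc k < n \<longrightarrow> v k \<le> u (Suc k)"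
      and len: "(\<Sum>k<n. v k - u k) < \<delta>" for n u v
  proof -
    have F: "(\<Sum>k<n. norm (f (v k) - f (u k))) < e / (2 * (L + 1))"
      using acf uv len by (auto simp: \<delta>_def)
    have "L * (\<Sum>k<n. norm (f (v k) - f (u k))) \<le> L * (e / (2 * (L + 1)))"
      using F \<open>L \<ge> 0\<close> by (intro mult_left_mono) auto
    also have "\<dots> \<le> e / 2" using \<open>L \<ge> 0\<close> \<open>e > 0\<close> by (simp add: field_simps)
    finally have Lpart: "L * (\<Sum>k<n. norm (f (v k) - f (u k))) \<le> e / 2" .
    have "c * (\<Sum>k<n. v k - u k) \<le> c * (e / (2 * (c + 1)))"
      using len \<open>c \<ge> 0\<close> by (intro mult_left_mono) (auto simp: \<delta>_def)
    also have "\<dots> < e / 2" using \<open>c \<ge> 0\<close> \<open>e > 0\<close> by (simp add: field_simps)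
    finally have cpart: "c * (\<Sum>k<n. v k - u k) < e / 2" .
    have "(\<Sum>k<n. norm (h (v k) - h (u k))) \<le> (\<Sum>k<n. L * norm (f (v k) - f (u k)) + c * (v k - u k))"
      using uv dom by (intro sum_mono) auto
    also have "\<dots> = L * (\<Sum>k<n. norm (f (v k) - f (u k))) + c * (\<Sum>k<n. v k - u k)"
      by (simp add: sum.distrib sum_distrib_left)
    finally show ?thesis using Lpart cpart by linarith
  qed
  moreover have "\<delta> > 0" using \<open>\<delta>1 > 0\<close> \<open>e > 0\<close> \<open>c \<ge> 0\<close> by (simp add: \<delta>_def)
  ultimately show "\<exists>\<delta>>0. \<forall>(n::nat) (u::nat \<Rightarrow> real) v.
      (\<forall>k<n. u k \<in> S \<and> v k \<in> S \<and> u k \<le> v k) \<and> (\<forall>k. Suc k < n \<longrightarrow> v k \<le> u (Suc k)) \<and>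
      (\<Sum>k<n. v k - u k) < \<delta> \<longrightarrow> (\<Sum>k<n. norm (h (v k) - h (u k))) < e"
    by blast
qed

lemma nonoverlapping_intervals_enum_sorted:
  fixes S :: "real set set"
  assumes "finite S" and iv: "\<And>k. k \<in> S \<Longrightarrow> k = {Inf k..Sup k} \<and> Inf k < Sup k"
    and disj: "pairwise (\<lambda>k k'. interior k \<inter> interior k' = {}) S"
  obtains K n where "bij_betw K {..<n} S" "\<And>i. Suc i < n \<Longrightarrow> Sup (K i) \<le> Inf (K (Suc i))"
proof -
  have interior_iv: "interior k = {Inf k<..<Sup k}" if "k \<in> S" for k
    using iv[OF that] by (metis interior_atLeastAtMost_real)
  have separated: "Sup k \<le> Inf k'" if "k \<in> S" "k' \<in> S" "k \<noteq> k'" "Inf k \<le> Inf k'" for k k'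
  proof (rule ccontr)
    assume "\<not> Sup k \<le> Inf k'"
    moreover have "Inf k' < Sup k'" using iv[OF that(2)] by blast
    ultimately have "(Inf k' + min (Sup k) (Sup k')) / 2 \<in> interior k \<inter> interior k'"
      using that(4) interior_iv[OF that(1)] interior_iv[OF that(2)] by auto
    with disj that show False by (auto simp: pairwise_def)
  qed
  have inj: "inj_on Inf S"
    by (rule inj_onI) (use separated iv in \<open>fastforce\<close>)
  define L where "L = sorted_list_of_set (Inf ` S)"
  define K where "K i = the_inv_into S Inf (L ! i)" for i
  have L: "set L = Inf ` S" "sorted_wrt (<) L" using \<open>finite S\<close> by (auto simp: L_def)
  have K: "K i \<in> S" "Inf (K i) = L ! i" if "i < length L" for i
    using that L(1) inj nth_mem[OF that] by (auto simp: K_def the_inv_into_f_f)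
  have "bij_betw K {..<length L} S"
  proof (rule bij_betw_imageI)
    show "inj_on K {..<length L}"
      using K L(2) by (intro inj_onI) (metis lessThan_iff nth_eq_iff_index_eq strict_sorted_iff)
    show "K ` {..<length L} = S"
    proof (intro subset_antisym subsetI)
      fix k assume "k \<in> S"
      then obtain i where "i < length L" "L ! i = Inf k" using L(1) by (metis imageI in_set_conv_nth)
      with \<open>k \<in> S\<close> inj show "k \<in> K ` {..<length L}" by (force simp: K_def the_inv_into_f_f)
    qed (use K in auto)
  qed
  moreover have "Sup (K i) \<le> Inf (K (Suc i))" if "Suc i < length L" for i
  proof -
    have "L ! i < L ! Suc i" using L(2) that by (simp add: sorted_wrt_iff_nth_less)
    then show ?thesis using separated[of "K i" "K (Suc i)"] K[of i] K[of "Suc i"] that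
      by (metis Suc_lessD less_irrefl order.strict_implies_order)
  qed
  ultimately show ?thesis using that by blast
qed

lemma abs_continuous_on_interval_family:
  fixes f :: "real \<Rightarrow> 'a::real_normed_vector"
  assumes "abs_continuous_on {a..b} f" "e > 0"
  obtains \<delta> where "\<delta> > 0"
    "\<And>S. finite S \<Longrightarrow> (\<And>k. k \<in> S \<Longrightarrow> k = {Inf k..Sup k} \<and> Inf k < Sup k \<and> k \<subseteq> {a..b}) \<Longrightarrow>
      pairwise (\<lambda>k k'. interior k \<inter> interior k' = {}) S \<Longrightarrow> (\<Sum>k\<in>S. Sup k - Inf k) < \<delta> \<Longrightarrow>
      (\<Sum>k\<in>S. norm (f (Sup k) - f (Inf k))) < e"
proof -
  obtain \<delta> where "\<delta> > 0" and ac: "\<forall>(n::nat) (u::nat \<Rightarrow> real) v.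
      (\<forall>k<n. u k \<in> {a..b} \<and> v k \<in> {a..b} \<and> u k \<le> v k) \<and> (\<forall>k. Suc k < n \<longrightarrow> v k \<le> u (Suc k)) \<and>
      (\<Sum>k<n. v k - u k) < \<delta> \<longrightarrow> (\<Sum>k<n. norm (f (v k) - f (u k))) < e"
    using assms unfolding abs_continuous_on_def by blast
  have "(\<Sum>k\<in>S. norm (f (Sup k) - f (Inf k))) < e"
    if "finite S" and iv: "\<And>k. k \<in> S \<Longrightarrow> k = {Inf k..Sup k} \<and> Inf k < Sup k \<and> k \<subseteq> {a..b}"
      and disj: "pairwise (\<lambda>k k'. interior k \<inter> interior k' = {}) S"
      and small: "(\<Sum>k\<in>S. Sup k - Inf k) < \<delta>" for S
  proof -
    have "\<And>k. k \<in> S \<Longrightarrow> k = {Inf k..Sup k} \<and> Inf k < Sup k" using iv by blast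
    then obtain K n where K: "bij_betw K {..<n} S" "\<And>i. Suc i < n \<Longrightarrow> Sup (K i) \<le> Inf (K (Suc i))"
      using nonoverlapping_intervals_enum_sorted[OF \<open>finite S\<close> _ disj] by blast
    have KS: "K i \<in> S" if "i < n" for i using K(1) that by (auto dest: bij_betwE)
    have "Inf (K i) \<in> {a..b} \<and> Sup (K i) \<in> {a..b} \<and> Inf (K i) \<le> Sup (K i)" if "i < n" for i
    proof -
      have "{Inf (K i)..Sup (K i)} \<subseteq> {a..b}" "Inf (K i) < Sup (K i)" using iv[OF KS[OF that]] by auto
      then show ?thesis by auto
    qed
    moreover have "(\<Sum>i<n. Sup (K i) - Inf (K i)) < \<delta>"
      using small sum.reindex_bij_betw[OF K(1), of "\<lambda>k. Sup k - Inf k"] by simp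
    ultimately have "(\<Sum>i<n. norm (f (Sup (K i)) - f (Inf (K i)))) < e"
      using ac[rule_format, of n "\<lambda>i. Inf (K i)" "\<lambda>i. Sup (K i)"] K(2) by blast
    then show ?thesis using sum.reindex_bij_betw[OF K(1), of "\<lambda>k. norm (f (Sup k) - f (Inf k))"] by simp
  qed
  with \<open>\<delta> > 0\<close> show ?thesis using that by blast
qed

lemma tagged_division_interval_real:
  assumes "p tagged_division_of {a..b :: real}" "(x, K) \<in> p"
  shows "K = {Inf K..Sup K}" "Inf K \<le> x" "x \<le> Sup K" "Henstock_Kurzweil_Integration.content K = Sup K - Inf K" "K \<subseteq> {a..b}"
proof -
  obtain c d where K: "K = cbox c d" using tagged_division_ofD(4)[OF assms] by blast
  moreover have "x \<in> K" using tagged_division_ofD(2)[OF assms] .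
  ultimately have "c \<le> d" by auto
  with K \<open>x \<in> K\<close> show "K = {Inf K..Sup K}" "Inf K \<le> x" "x \<le> Sup K" "Henstock_Kurzweil_Integration.content K = Sup K - Inf K"
    by auto
  show "K \<subseteq> {a..b}" using tagged_division_ofD(3)[OF assms] .
qed

lemma tagged_division_inj_on_snd:
  assumes p: "p tagged_division_of {a..b :: real}"
  shows "inj_on snd {(x, K) \<in> p. Inf K < Sup K}"
proof (rule inj_onI, rule ccontr)
  fix i j assume ij: "i \<in> {(x, K) \<in> p. Inf K < Sup K}" "j \<in> {(x, K) \<in> p. Inf K < Sup K}" "snd i = snd j" "i \<noteq> j"
  obtain x y K where i: "i = (x, K)" and j: "j = (y, K)" using ij(3) by (metis prod.collapse)
  then have "(x, K) \<in> p" "(y, K) \<in> p" "Inf K < Sup K" using ij(1,2) by auto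
  then have "interior K = {}" using tagged_division_ofD(5)[OF p] ij(4) i j by blast
  moreover have "interior K = {Inf K<..<Sup K}"
    using tagged_division_interval_real(1)[OF p \<open>(x, K) \<in> p\<close>] by (metis interior_atLeastAtMost_real)
  ultimately show False using \<open>Inf K < Sup K\<close> by auto
qed

lemma abs_continuous_on_tagged_subdivision:
  fixes f :: "real \<Rightarrow> real"
  assumes "abs_continuous_on {a..b} f" "e > 0"
  obtains \<delta> where "\<delta> > 0"
    "\<And>p P. p tagged_division_of {a..b} \<Longrightarrow> P \<subseteq> p \<Longrightarrow> (\<Sum>(x, K)\<in>P. Henstock_Kurzweil_Integration.content K) < \<delta> \<Longrightarrow>
      (\<Sum>(x, K)\<in>P. f (Sup K) - f (Inf K)) < e"
proof -
  obtain \<delta> where "\<delta> > 0" and ac: "\<And>S. finite S \<Longrightarrow>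
      (\<And>k. k \<in> S \<Longrightarrow> k = {Inf k..Sup k} \<and> Inf k < Sup k \<and> k \<subseteq> {a..b}) \<Longrightarrow>
      pairwise (\<lambda>k k'. interior k \<inter> interior k' = {}) S \<Longrightarrow> (\<Sum>k\<in>S. Sup k - Inf k) < \<delta> \<Longrightarrow>
      (\<Sum>k\<in>S. norm (f (Sup k) - f (Inf k))) < e"
    using abs_continuous_on_interval_family[OF assms] by blast
  have "(\<Sum>(x, K)\<in>P. f (Sup K) - f (Inf K)) < e"
    if p: "p tagged_division_of {a..b}" and "P \<subseteq> p" and small: "(\<Sum>(x, K)\<in>P. Henstock_Kurzweil_Integration.content K) < \<delta>" for p P
  proof -
    note iv = tagged_division_interval_real[OF p]
    define P' where "P' = {(x, K) \<in> P. Inf K < Sup K}"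
    have "finite P" using \<open>P \<subseteq> p\<close> p finite_subset by blast
    then have "finite P'" by (rule finite_subset[rotated]) (auto simp: P'_def)
    have P'p: "P' \<subseteq> p" using \<open>P \<subseteq> p\<close> by (auto simp: P'_def)
    have disjoint: "interior K \<inter> interior K' = {}" if "(x, K) \<in> P'" "(x', K') \<in> P'" "(x, K) \<noteq> (x', K')"
      for x K x' K'
      using tagged_division_ofD(5)[OF p] that P'p by blast
    have inj: "inj_on snd P'"
      using tagged_division_inj_on_snd[OF p] by (rule inj_on_subset) (use \<open>P \<subseteq> p\<close> in \<open>auto simp: P'_def\<close>)
    have P'_iv: "K = {Inf K..Sup K} \<and> Inf K < Sup K \<and> K \<subseteq> {a..b}" if "(x, K) \<in> P'" for x K
    proof -
      have "(x, K) \<in> p" "Inf K < Sup K" using that P'p by (auto simp: P'_def)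
      then show ?thesis using iv(1,5) by blast
    qed
    have "(\<Sum>(x, K)\<in>P. f (Sup K) - f (Inf K)) = (\<Sum>(x, K)\<in>P'. f (Sup K) - f (Inf K))"
    proof (rule sum.mono_neutral_right[OF \<open>finite P\<close>])
      show "P' \<subseteq> P" by (auto simp: P'_def)
      have "Inf K = Sup K" if "(x, K) \<in> P - P'" for x K
        using that iv(2,3)[of x K] \<open>P \<subseteq> p\<close> by (auto simp: P'_def)
      then show "\<forall>i\<in>P - P'. (case i of (x, K) \<Rightarrow> f (Sup K) - f (Inf K)) = 0" by auto
    qed
    also have "\<dots> \<le> (\<Sum>(x, K)\<in>P'. \<bar>f (Sup K) - f (Inf K)\<bar>)" by (intro sum_mono) auto
    also have "\<dots> = (\<Sum>K\<in>snd ` P'. norm (f (Sup K) - f (Inf K)))"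
      by (simp add: sum.reindex[OF inj] case_prod_beta)
    also have "\<dots> < e"
    proof (rule ac)
      show "finite (snd ` P')" using \<open>finite P'\<close> by blast
      show "k = {Inf k..Sup k} \<and> Inf k < Sup k \<and> k \<subseteq> {a..b}" if "k \<in> snd ` P'" for k
        using that P'_iv by force
      show "pairwise (\<lambda>k k'. interior k \<inter> interior k' = {}) (snd ` P')"
      proof (rule pairwiseI)
        fix k k' assume "k \<in> snd ` P'" "k' \<in> snd ` P'" "k \<noteq> k'"
        then obtain x x' where "(x, k) \<in> P'" "(x', k') \<in> P'" "(x, k) \<noteq> (x', k')" by force
        then show "interior k \<inter> interior k' = {}" by (rule disjoint)
      qed
      have "(\<Sum>k\<in>snd ` P'. Sup k - Inf k) = (\<Sum>(x, K)\<in>P'. Henstock_Kurzweil_Integration.content K)"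
        unfolding sum.reindex[OF inj] using P'p iv(4) by (intro sum.cong) auto
      also have "\<dots> \<le> (\<Sum>(x, K)\<in>P. Henstock_Kurzweil_Integration.content K)"
        using \<open>finite P\<close> by (intro sum_mono2) (auto simp: P'_def)
      finally show "(\<Sum>k\<in>snd ` P'. Sup k - Inf k) < \<delta>" using small by linarith
    qed
    finally show ?thesis .
  qed
  with \<open>\<delta> > 0\<close> show ?thesis using that by blast
qed

lemma negligible_tags_gauge:
  fixes N :: "'a::euclidean_space set"
  assumes "negligible N" "\<delta> > 0"
  obtains \<gamma> where "gauge \<gamma>"
    "\<And>p. p tagged_division_of cbox a b \<Longrightarrow> \<gamma> fine p \<Longrightarrow>
      (\<Sum>(x, K)\<in>{(x, K) \<in> p. x \<in> N}. Henstock_Kurzweil_Integration.content K) < \<delta>"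
proof -
  have "((indicator N :: 'a \<Rightarrow> real) has_integral 0) (cbox a b)"
    using assms(1) by (simp add: negligible_def)
  then obtain \<gamma> where "gauge \<gamma>"
    and \<gamma>: "\<And>p. p tagged_division_of cbox a b \<Longrightarrow> \<gamma> fine p \<Longrightarrow>
      norm ((\<Sum>(x, K)\<in>p. Henstock_Kurzweil_Integration.content K *\<^sub>R (indicator N x :: real)) - 0) < \<delta>"
    using assms(2) unfolding has_integral by meson
  have "(\<Sum>(x, K)\<in>{(x, K) \<in> p. x \<in> N}. Henstock_Kurzweil_Integration.content K) < \<delta>"
    if p: "p tagged_division_of cbox a b" "\<gamma> fine p" for p
  proof -
    have "finite p" using p(1) by blast
    have "(\<Sum>(x, K)\<in>{(x, K) \<in> p. x \<in> N}. Henstock_Kurzweil_Integration.content K)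
        = (\<Sum>(x, K)\<in>{(x, K) \<in> p. x \<in> N}. Henstock_Kurzweil_Integration.content K *\<^sub>R (indicator N x :: real))"
      by (intro sum.cong) (auto simp: indicator_def)
    also have "\<dots> = (\<Sum>(x, K)\<in>p. Henstock_Kurzweil_Integration.content K *\<^sub>R (indicator N x :: real))"
      using \<open>finite p\<close> by (intro sum.mono_neutral_left) (auto simp: indicator_def)
    also have "\<dots> < \<delta>" using \<gamma>[OF p] by simp
    finally show ?thesis .
  qed
  with \<open>gauge \<gamma>\<close> show ?thesis using that by blast
qed

lemma nonpos_derivative_gauge:
  fixes f :: "real \<Rightarrow> real"
  assumes der: "\<And>t. t \<in> T \<Longrightarrow> \<exists>D. (f has_real_derivative D) (at t) \<and> D \<le> 0" and "e > 0"
  obtains \<gamma> where "gauge \<gamma>"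
    "\<And>t u v. t \<in> T \<Longrightarrow> u \<le> t \<Longrightarrow> t \<le> v \<Longrightarrow> {u..v} \<subseteq> \<gamma> t \<Longrightarrow> f v - f u \<le> e * (v - u)"
proof -
  define straddles where "straddles t r \<longleftrightarrow> r > 0 \<and> (t \<in> T \<longrightarrow>
      (\<forall>u v. u \<le> t \<longrightarrow> t \<le> v \<longrightarrow> t - u < r \<longrightarrow> v - t < r \<longrightarrow> f v - f u \<le> e * (v - u)))" for t r
  have "\<exists>r. straddles t r" for t
  proof (cases "t \<in> T")
    case True
    then obtain D where D: "(f has_real_derivative D) (at t)" "D \<le> 0" using der by blast
    obtain r where "r > 0"
      "\<And>u v. u \<le> t \<Longrightarrow> t \<le> v \<Longrightarrow> t - u < r \<Longrightarrow> v - t < r \<Longrightarrow> f v - f u \<le> e * (v - u)"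
      using nonpos_derivative_straddle[OF D \<open>e > 0\<close>] by blast
    then show ?thesis unfolding straddles_def by blast
  next
    case False
    then have "straddles t 1" unfolding straddles_def using zero_less_one by blast
    then show ?thesis ..
  qed
  then obtain r where r: "\<And>t. straddles t (r t)" by metis
  have "gauge (\<lambda>t. ball t (r t))"
    by (rule gauge_ball_dependent) (use r in \<open>auto simp: straddles_def\<close>)
  moreover have "f v - f u \<le> e * (v - u)"
    if "t \<in> T" "u \<le> t" "t \<le> v" "{u..v} \<subseteq> ball t (r t)" for t u v
  proof -
    have "u \<in> {u..v}" "v \<in> {u..v}" using that(2,3) by auto
    then have "u \<in> ball t (r t)" "v \<in> ball t (r t)" using that(4) by blast+
    then have "t - u < r t" "v - t < r t" using that(2,3) by (auto simp: dist_real_def)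
    then show ?thesis using r[of t] that(1-3) unfolding straddles_def by blast
  qed
  ultimately show ?thesis by (rule that)
qed

lemma abs_continuous_on_nonpos_derivative_approx:
  fixes f :: "real \<Rightarrow> real"
  assumes "a \<le> b" and ac: "abs_continuous_on {a..b} f" and "negligible N"
    and der: "\<And>t. t \<in> {a<..<b} - N \<Longrightarrow> \<exists>D. (f has_real_derivative D) (at t) \<and> D \<le> 0"
    and "e > 0"
  shows "f b - f a \<le> e * (b - a) + e"
proof -
  define N' where "N' = N \<union> {a, b}"
  have "negligible N'" using \<open>negligible N\<close> by (simp add: N'_def)
  obtain \<delta> where "\<delta> > 0" and small_sum: "\<And>p P. p tagged_division_of {a..b} \<Longrightarrow> P \<subseteq> p \<Longrightarrow>
      (\<Sum>(x, K)\<in>P. Henstock_Kurzweil_Integration.content K) < \<delta> \<Longrightarrow> (\<Sum>(x, K)\<in>P. f (Sup K) - f (Inf K)) < e"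
    using abs_continuous_on_tagged_subdivision[OF ac \<open>e > 0\<close>] by blast
  obtain \<gamma>1 where "gauge \<gamma>1" and \<gamma>1: "\<And>p. p tagged_division_of cbox a b \<Longrightarrow> \<gamma>1 fine p \<Longrightarrow>
      (\<Sum>(x, K)\<in>{(x, K) \<in> p. x \<in> N'}. Henstock_Kurzweil_Integration.content K) < \<delta>"
    using negligible_tags_gauge[OF \<open>negligible N'\<close> \<open>\<delta> > 0\<close>] by blast
  have "\<exists>D. (f has_real_derivative D) (at t) \<and> D \<le> 0" if "t \<in> {a..b} - N'" for t
    using der that by (simp add: N'_def)
  then obtain \<gamma>2 where "gauge \<gamma>2" and \<gamma>2: "\<And>t u v. t \<in> {a..b} - N' \<Longrightarrow> u \<le> t \<Longrightarrow> t \<le> v \<Longrightarrow>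
      {u..v} \<subseteq> \<gamma>2 t \<Longrightarrow> f v - f u \<le> e * (v - u)"
    using nonpos_derivative_gauge[where T = "{a..b} - N'" and f = f, OF _ \<open>e > 0\<close>] by blast
  obtain p where p_cbox: "p tagged_division_of cbox a b" and fine: "(\<lambda>t. \<gamma>1 t \<inter> \<gamma>2 t) fine p"
    using fine_division_exists[OF gauge_Int[OF \<open>gauge \<gamma>1\<close> \<open>gauge \<gamma>2\<close>]] by blast
  then have p: "p tagged_division_of {a..b}" by simp
  note iv = tagged_division_interval_real[OF p]
  have "finite p" using p by blast
  define P where "P = {(x, K) \<in> p. x \<in> N'}"
  have "P \<subseteq> p" by (auto simp: P_def)
  have good: "f (Sup K) - f (Inf K) \<le> e * Henstock_Kurzweil_Integration.content K"
    if "(x, K) \<in> p - P" for x K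
  proof -
    have xK: "(x, K) \<in> p" "x \<notin> N'" using that by (auto simp: P_def)
    have "x \<in> {a..b}" using tagged_division_ofD(2,3)[OF p xK(1)] by blast
    moreover have "{Inf K..Sup K} \<subseteq> \<gamma>2 x" using fine xK(1) iv(1)[OF xK(1)] by (auto simp: fine_def)
    ultimately show ?thesis using \<gamma>2[of x "Inf K" "Sup K"] xK(2) iv(2-4)[OF xK(1)] by simp
  qed
  have "f b - f a = (\<Sum>(x, K)\<in>p. f (Sup K) - f (Inf K))"
    using additive_tagged_division_1[OF \<open>a \<le> b\<close> p, of f] by simp
  also have "\<dots> = (\<Sum>(x, K)\<in>P. f (Sup K) - f (Inf K)) + (\<Sum>(x, K)\<in>p - P. f (Sup K) - f (Inf K))"
    using sum.subset_diff[OF _ \<open>finite p\<close>, of P "\<lambda>(x, K). f (Sup K) - f (Inf K)"]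
    unfolding P_def by fastforce
  also have "\<dots> \<le> e + e * (b - a)"
  proof (rule add_mono)
    have "\<gamma>1 fine p" using fine by (auto simp: fine_def)
    then have "(\<Sum>(x, K)\<in>P. Henstock_Kurzweil_Integration.content K) < \<delta>"
      unfolding P_def using \<gamma>1[OF p_cbox] by blast
    then show "(\<Sum>(x, K)\<in>P. f (Sup K) - f (Inf K)) \<le> e"
      by (intro less_imp_le small_sum[OF p \<open>P \<subseteq> p\<close>])
    have "(\<Sum>(x, K)\<in>p - P. f (Sup K) - f (Inf K)) \<le> (\<Sum>(x, K)\<in>p - P. e * Henstock_Kurzweil_Integration.content K)"
      using good by (intro sum_mono) auto
    also have "\<dots> \<le> e * (\<Sum>(x, K)\<in>p. Henstock_Kurzweil_Integration.content K)"
      using \<open>finite p\<close> \<open>e > 0\<close> by (simp add: sum_distrib_left case_prod_unfold sum_mono2)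
    also have "\<dots> = e * (b - a)"
      using additive_content_tagged_division[OF p_cbox] \<open>a \<le> b\<close> by simp
    finally show "(\<Sum>(x, K)\<in>p - P. f (Sup K) - f (Inf K)) \<le> e * (b - a)" .
  qed
  finally show ?thesis by simp
qed

lemma abs_continuous_on_nonpos_derivative_imp_le:
  fixes f :: "real \<Rightarrow> real"
  assumes "a \<le> b" "abs_continuous_on {a..b} f" "negligible N"
    and "\<And>t. t \<in> {a<..<b} - N \<Longrightarrow> \<exists>D. (f has_real_derivative D) (at t) \<and> D \<le> 0"
  shows "f b \<le> f a"
proof (rule field_le_epsilon)
  fix e :: real assume "e > 0"
  then have ep: "e / (b - a + 1) > 0" using \<open>a \<le> b\<close> by simp
  have "f b - f a \<le> e / (b - a + 1) * (b - a) + e / (b - a + 1)"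
    by (rule abs_continuous_on_nonpos_derivative_approx[OF assms ep])
  also have "\<dots> = e / (b - a + 1) * (b - a + 1)" by (simp only: distrib_left mult_1_right)
  also have "\<dots> = e" using \<open>a \<le> b\<close> by simp
  finally show "f b \<le> f a + e" by simp
qed

lemma zero_isolated_if_nonzero_derivative:
  fixes z :: "real \<Rightarrow> real"
  assumes D: "(z has_real_derivative D) (at t)" "D \<noteq> 0" and "z t = 0"
  obtains h where "h > 0" "\<And>s. 0 < \<bar>s - t\<bar> \<Longrightarrow> \<bar>s - t\<bar> < h \<Longrightarrow> z s \<noteq> 0"
proof -
  have "\<bar>D\<bar> / 2 > 0" using D(2) by simp
  then obtain h where "h > 0" and h: "\<And>s. \<bar>s - t\<bar> < h \<Longrightarrow> \<bar>z s - z t - D * (s - t)\<bar> \<le> \<bar>D\<bar> / 2 * \<bar>s - t\<bar>"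
    using has_real_derivative_linear_approx[OF D(1)] by blast
  have "z s \<noteq> 0" if "0 < \<bar>s - t\<bar>" "\<bar>s - t\<bar> < h" for s
  proof
    assume "z s = 0"
    then have "\<bar>D\<bar> * \<bar>s - t\<bar> \<le> \<bar>D\<bar> / 2 * \<bar>s - t\<bar>" using h[OF that(2)] \<open>z t = 0\<close> by (simp add: abs_mult)
    then show False using that(1) D(2) by (simp add: mult_le_cancel_right)
  qed
  with \<open>h > 0\<close> show ?thesis using that by blast
qed

lemma countable_zeros_with_nonzero_derivative:
  fixes z :: "real \<Rightarrow> real"
  shows "countable {t. z t = 0 \<and> (\<exists>D. (z has_real_derivative D) (at t) \<and> D \<noteq> 0)}" (is "countable ?Z")
proof -
  have "\<forall>t\<in>?Z. \<exists>h. h > 0 \<and> (\<forall>s. 0 < \<bar>s - t\<bar> \<longrightarrow> \<bar>s - t\<bar> < h \<longrightarrow> z s \<noteq> 0)"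
  proof
    fix t assume "t \<in> ?Z"
    then obtain D where D: "(z has_real_derivative D) (at t)" "D \<noteq> 0" "z t = 0" by blast
    obtain h where "h > 0" "\<And>s. 0 < \<bar>s - t\<bar> \<Longrightarrow> \<bar>s - t\<bar> < h \<Longrightarrow> z s \<noteq> 0"
      using zero_isolated_if_nonzero_derivative[OF D] by blast
    then show "\<exists>h. h > 0 \<and> (\<forall>s. 0 < \<bar>s - t\<bar> \<longrightarrow> \<bar>s - t\<bar> < h \<longrightarrow> z s \<noteq> 0)" by blast
  qed
  from bchoice[OF this] obtain h
    where "\<forall>t\<in>?Z. h t > 0 \<and> (\<forall>s. 0 < \<bar>s - t\<bar> \<longrightarrow> \<bar>s - t\<bar> < h t \<longrightarrow> z s \<noteq> 0)"
    by blast
  then have h: "\<And>t. t \<in> ?Z \<Longrightarrow> h t > 0"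
    and isolated: "\<And>t s. t \<in> ?Z \<Longrightarrow> 0 < \<bar>s - t\<bar> \<Longrightarrow> \<bar>s - t\<bar> < h t \<Longrightarrow> z s \<noteq> 0"
    by blast+
  have "\<forall>t\<in>?Z. \<exists>q. q \<in> \<rat> \<and> t < q \<and> q < t + h t / 2"
  proof
    fix t assume "t \<in> ?Z"
    then have "t < t + h t / 2" using h by simp
    then show "\<exists>q. q \<in> \<rat> \<and> t < q \<and> q < t + h t / 2" using Rats_dense_in_real by blast
  qed
  from bchoice[OF this] obtain q where "\<forall>t\<in>?Z. q t \<in> \<rat> \<and> t < q t \<and> q t < t + h t / 2"
    by blast
  then have q: "\<And>t. t \<in> ?Z \<Longrightarrow> q t \<in> \<rat> \<and> t < q t \<and> q t < t + h t / 2" by blast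
  have "inj_on q ?Z"
  proof (rule inj_onI, rule ccontr)
    fix t t' assume tt': "t \<in> ?Z" "t' \<in> ?Z" "q t = q t'" "t \<noteq> t'"
    have zero: "z t = 0" "z t' = 0" using tt'(1,2) by simp_all
    consider "t < t'" | "t' < t" using tt'(4) by linarith
    then show False
    proof cases
      case 1
      moreover have "t' < t + h t / 2" "h t > 0" using q[OF tt'(1)] q[OF tt'(2)] tt'(3) h[OF tt'(1)] by auto
      ultimately have "0 < \<bar>t' - t\<bar>" "\<bar>t' - t\<bar> < h t" by linarith+
      then show False using isolated[OF tt'(1)] zero(2) by blast
    next
      case 2
      moreover have "t < t' + h t' / 2" "h t' > 0" using q[OF tt'(1)] q[OF tt'(2)] tt'(3) h[OF tt'(2)] by auto
      ultimately have "0 < \<bar>t - t'\<bar>" "\<bar>t - t'\<bar> < h t'" by linarith+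
      then show False using isolated[OF tt'(2)] zero(1) by blast
    qed
  qed
  moreover have "q ` ?Z \<subseteq> \<rat>" using q by blast
  then have "countable (q ` ?Z)" using countable_rat by (rule countable_subset)
  ultimately show ?thesis by (rule countable_image_inj_on[rotated])
qed

lemma continuous_decrease_while_positive:
  fixes h :: "real \<Rightarrow> real"
  assumes "s \<le> t" "continuous_on {s..t} h" and nonneg: "\<And>r. r \<in> {s..t} \<Longrightarrow> h r \<ge> 0" and "c \<ge> 0"
    and decrease: "\<And>a b. s \<le> a \<Longrightarrow> a \<le> b \<Longrightarrow> b \<le> t \<Longrightarrow> (\<forall>r\<in>{a<..b}. h r > 0) \<Longrightarrow> h b \<le> h a - c * (b - a)"
  shows "h t \<le> max (h s - c * (t - s)) 0"
proof (cases "\<exists>r\<in>{s..t}. h r = 0")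
  case True
  define Z where "Z = {r \<in> {s..t}. h r = 0}"
  have "Z \<noteq> {}" using True by (auto simp: Z_def)
  moreover have "bdd_above Z" by (rule bdd_aboveI[of _ t]) (auto simp: Z_def)
  moreover have "closed Z"
    unfolding Z_def by (rule continuous_closed_preimage_constant[OF assms(2)]) simp
  ultimately have "Sup Z \<in> Z" by (rule closed_contains_Sup)
  then have last_zero: "s \<le> Sup Z" "Sup Z \<le> t" "h (Sup Z) = 0" unfolding Z_def by auto
  have "h r > 0" if r: "r \<in> {Sup Z<..t}" for r
  proof -
    have "r \<notin> Z" using cSup_upper[OF _ \<open>bdd_above Z\<close>, of r] r by auto
    moreover have "r \<in> {s..t}" using r last_zero by auto
    ultimately have "h r \<noteq> 0" by (simp add: Z_def)
    with nonneg[OF \<open>r \<in> {s..t}\<close>] show ?thesis by linarith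
  qed
  then have "h t \<le> h (Sup Z) - c * (t - Sup Z)" using decrease[OF last_zero(1,2) order_refl] by blast
  also have "\<dots> \<le> 0" using last_zero \<open>c \<ge> 0\<close> by simp
  finally show ?thesis by simp
next
  case False
  have "h r > 0" if "r \<in> {s<..t}" for r
  proof -
    have "r \<in> {s..t}" using that by auto
    with False nonneg[OF this] show ?thesis by force
  qed
  then have "h t \<le> h s - c * (t - s)" using decrease[OF order_refl \<open>s \<le> t\<close> order_refl] by blast
  then show ?thesis by simp
qed

section \<open>Krasovskii regularization near zero\<close>

lemma krasovskii_subset:
  assumes "\<delta> > 0" "f ` {s - \<delta>..s + \<delta>} \<subseteq> K" "closed K" "convex K"
  shows "krasovskii f s \<subseteq> K"
proof -
  have "closure (convex hull (f ` {s - \<delta>..s + \<delta>})) \<subseteq> K"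
    using assms(2-4) by (intro closure_minimal hull_minimal) auto
  then show ?thesis using \<open>\<delta> > 0\<close> unfolding krasovskii_def by blast
qed

lemma krasovskii_near:
  assumes "w \<in> krasovskii f s" "\<delta> > 0" "\<And>r. \<bar>r - s\<bar> \<le> \<delta> \<Longrightarrow> \<bar>f r - c\<bar> \<le> \<eta>"
  shows "\<bar>w - c\<bar> \<le> \<eta>"
proof -
  have "f ` {s - \<delta>..s + \<delta>} \<subseteq> cball c \<eta>"
    using assms(3) by (auto simp: dist_real_def abs_minus_commute abs_le_iff)
  then have "w \<in> cball c \<eta>" using krasovskii_subset[OF \<open>\<delta> > 0\<close>] assms(1) by blast
  then show ?thesis by (simp add: dist_real_def abs_minus_commute)
qed

lemma krasovskii_near_zero:
  assumes lp: "(f \<longlongrightarrow> lp) (at_right 0)" and lm: "(f \<longlongrightarrow> lm) (at_left 0)" and "\<eta> > 0"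
  obtains \<epsilon> where "\<epsilon> > 0" "\<And>s w. \<bar>s\<bar> < \<epsilon> \<Longrightarrow> w \<in> krasovskii f s \<Longrightarrow>
     (s > 0 \<longrightarrow> \<bar>w - lp\<bar> \<le> \<eta>) \<and> (s < 0 \<longrightarrow> \<bar>w - lm\<bar> \<le> \<eta>) \<and> \<bar>w\<bar> \<le> \<bar>lp\<bar> + \<bar>lm\<bar> + \<eta> + \<bar>f 0\<bar>"
proof -
  obtain b1 where "b1 > 0" and b1: "\<And>r. 0 < r \<Longrightarrow> r < b1 \<Longrightarrow> \<bar>f r - lp\<bar> < \<eta>"
    using lp \<open>\<eta> > 0\<close> unfolding tendsto_iff eventually_at_right_field by (auto simp: dist_real_def)
  obtain b2 where "b2 < 0" and b2: "\<And>r. b2 < r \<Longrightarrow> r < 0 \<Longrightarrow> \<bar>f r - lm\<bar> < \<eta>"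
    using lm \<open>\<eta> > 0\<close> unfolding tendsto_iff eventually_at_left_field by (auto simp: dist_real_def)
  define \<epsilon> where "\<epsilon> = min b1 (- b2)"
  have "\<epsilon> > 0" using \<open>b1 > 0\<close> \<open>b2 < 0\<close> by (simp add: \<epsilon>_def)
  have right: "\<bar>f r - lp\<bar> < \<eta>" if "0 < r" "r < \<epsilon>" for r using b1 that by (simp add: \<epsilon>_def)
  have left: "\<bar>f r - lm\<bar> < \<eta>" if "r < 0" "- \<epsilon> < r" for r using b2 that by (simp add: \<epsilon>_def)
  have bounded: "\<bar>f r - 0\<bar> \<le> \<bar>lp\<bar> + \<bar>lm\<bar> + \<eta> + \<bar>f 0\<bar>" if "\<bar>r\<bar> < \<epsilon>" for r
    using right[of r] left[of r] that \<open>\<eta> > 0\<close> by (cases r "0::real" rule: linorder_cases) auto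
  have "(s > 0 \<longrightarrow> \<bar>w - lp\<bar> \<le> \<eta>) \<and> (s < 0 \<longrightarrow> \<bar>w - lm\<bar> \<le> \<eta>) \<and> \<bar>w\<bar> \<le> \<bar>lp\<bar> + \<bar>lm\<bar> + \<eta> + \<bar>f 0\<bar>"
    if s: "\<bar>s\<bar> < \<epsilon>" and w: "w \<in> krasovskii f s" for s w
  proof (intro conjI impI)
    show "\<bar>w - lp\<bar> \<le> \<eta>" if "s > 0"
      using s that
      by (intro krasovskii_near[OF w, of "min s (\<epsilon> - s) / 2"] less_imp_le right) (auto simp: abs_if split: if_split_asm)
    show "\<bar>w - lm\<bar> \<le> \<eta>" if "s < 0"
      using s that
      by (intro krasovskii_near[OF w, of "min (- s) (\<epsilon> + s) / 2"] less_imp_le left) (auto simp: abs_if split: if_split_asm)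
    show "\<bar>w\<bar> \<le> \<bar>lp\<bar> + \<bar>lm\<bar> + \<eta> + \<bar>f 0\<bar>"
    proof -
      have "\<bar>r\<bar> < \<epsilon>" if "\<bar>r - s\<bar> \<le> (\<epsilon> - \<bar>s\<bar>) / 2" for r
        using that s by (auto simp: abs_if split: if_split_asm)
      then have "\<bar>w - 0\<bar> \<le> \<bar>lp\<bar> + \<bar>lm\<bar> + \<eta> + \<bar>f 0\<bar>"
        using s bounded by (intro krasovskii_near[OF w, of "(\<epsilon> - \<bar>s\<bar>) / 2"]) auto
      then show ?thesis by simp
    qed
  qed
  with \<open>\<epsilon> > 0\<close> show ?thesis using that by blast
qed

lemma inner_diag_lyapunov_matrix:
  fixes M :: "real^'p::finite^'p" and v :: "real^'p"
  shows "v \<bullet> ((diag_mat g ** M + transpose M ** diag_mat g) *v v) = 2 * (\<Sum>i\<in>UNIV. g i * v$i * (M *v v)$i)"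
proof -
  have left: "(diag_mat g ** M) $ i $ j = g i * M $ i $ j" for i j
    by (simp add: diag_mat_def matrix_matrix_mult_def if_distrib if_distribR sum.delta cong: if_cong)
  have right: "(transpose M ** diag_mat g) $ i $ j = M $ j $ i * g j" for i j
    by (simp add: diag_mat_def matrix_matrix_mult_def transpose_def if_distrib if_distribR sum.delta' cong: if_cong)
  have "v \<bullet> ((diag_mat g ** M + transpose M ** diag_mat g) *v v)
      = (\<Sum>i\<in>UNIV. \<Sum>j\<in>UNIV. v$i * (g i * M$i$j) * v$j) + (\<Sum>i\<in>UNIV. \<Sum>j\<in>UNIV. v$i * (M$j$i * g j) * v$j)"
    by (simp add: inner_vec_def matrix_vector_mult_def left right sum_distrib_left algebra_simps sum.distrib)
  also have "(\<Sum>i\<in>UNIV. \<Sum>j\<in>UNIV. v$i * (M$j$i * g j) * v$j) = (\<Sum>i\<in>UNIV. \<Sum>j\<in>UNIV. v$i * (g i * M$i$j) * v$j)"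
    by (subst sum.swap) (simp add: algebra_simps)
  also have "(\<Sum>i\<in>UNIV. \<Sum>j\<in>UNIV. v$i * (g i * M$i$j) * v$j) = (\<Sum>i\<in>UNIV. g i * v$i * (M *v v)$i)"
    by (simp add: matrix_vector_mult_def sum_distrib_left algebra_simps)
  finally show ?thesis by simp
qed

lemma pos_def_mat_lower_bound:
  fixes G :: "real^'p::finite^'p"
  assumes "pos_def_mat G"
  obtains m where "m > 0" "\<And>v. m * (norm v)^2 \<le> v \<bullet> (G *v v)"
proof -
  define q where "q v = v \<bullet> (G *v v)" for v :: "real^'p"
  have "continuous_on (sphere 0 1) q"
    unfolding q_def by (intro continuous_intros linear_continuous_on) (auto intro: linear_linear)
  moreover have "sphere (0::real^'p) 1 \<noteq> {}" by (simp add: sphere_eq_empty)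
  ultimately obtain v0 where v0: "v0 \<in> sphere 0 1" "\<And>u. u \<in> sphere 0 1 \<Longrightarrow> q v0 \<le> q u"
    using continuous_attains_inf[OF compact_sphere] by blast
  have "v0 \<noteq> 0" using v0(1) by auto
  then have "q v0 > 0" using assms unfolding pos_def_mat_def q_def by blast
  moreover have "q v0 * (norm v)^2 \<le> q v" for v
  proof (cases "v = 0")
    case False
    define u where "u = (1 / norm v) *\<^sub>R v"
    have "u \<in> sphere 0 1" using False by (simp add: u_def)
    have "q v = (norm v)^2 * q u"
      using False by (simp add: q_def u_def matrix_vector_mult_scaleR power2_eq_square)
    then show ?thesis
      using mult_right_mono[OF v0(2)[OF \<open>u \<in> sphere 0 1\<close>], of "(norm v)^2"] by (simp add: mult.commute)
  qed (simp add: q_def)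
  ultimately show ?thesis using that unfolding q_def by blast
qed

lemma lyap_diag_stable_lower_bound:
  assumes "lyap_diag_stable M"
  obtains g m where "\<And>i. g i > 0" "m > 0" "\<And>v. m * (norm v)^2 \<le> (\<Sum>i\<in>UNIV. g i * v$i * (M *v v)$i)"
proof -
  obtain g where g: "\<And>i. g i > 0" and pd: "pos_def_mat (diag_mat g ** M + transpose M ** diag_mat g)"
    using assms unfolding lyap_diag_stable_def by blast
  obtain m where "m > 0" and m: "\<And>v. m * (norm v)^2 \<le> v \<bullet> ((diag_mat g ** M + transpose M ** diag_mat g) *v v)"
    using pos_def_mat_lower_bound[OF pd] by blast
  have "m / 2 * (norm v)^2 \<le> (\<Sum>i\<in>UNIV. g i * v$i * (M *v v)$i)" for v
    using m[of v] unfolding inner_diag_lyapunov_matrix by simp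
  with g \<open>m > 0\<close> show ?thesis using that half_gt_zero by blast
qed

section \<open>The output Lyapunov function\<close>

definition sided_slope :: "real \<Rightarrow> real \<Rightarrow> real \<Rightarrow> real" where
  "sided_slope lp lm s = (if 0 \<le> s then lp else lm)"

definition sided_linear :: "real \<Rightarrow> real \<Rightarrow> real \<Rightarrow> real" where
  "sided_linear lp lm s = sided_slope lp lm s * s"

lemma abs_sided_slope_le: "\<bar>sided_slope lp lm s\<bar> \<le> \<bar>lp\<bar> + \<bar>lm\<bar>"
  by (simp add: sided_slope_def)

lemma sided_linear_lower_bound:
  assumes "a \<le> lp" "a \<le> - lm"
  shows "a * \<bar>s\<bar> \<le> sided_linear lp lm s"
  using assms mult_right_mono[of a lp s] mult_right_mono[of a "- lm" "- s"]
  by (auto simp: sided_linear_def sided_slope_def)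

lemma sided_linear_upper_bound: "sided_linear lp lm s \<le> (\<bar>lp\<bar> + \<bar>lm\<bar>) * \<bar>s\<bar>"
proof -
  have "sided_linear lp lm s \<le> \<bar>sided_slope lp lm s\<bar> * \<bar>s\<bar>"
    unfolding sided_linear_def by (metis abs_ge_self abs_mult)
  also have "\<dots> \<le> (\<bar>lp\<bar> + \<bar>lm\<bar>) * \<bar>s\<bar>" by (intro mult_right_mono abs_sided_slope_le) simp
  finally show ?thesis .
qed

lemma sided_linear_lipschitz:
  "\<bar>sided_linear lp lm s - sided_linear lp lm s'\<bar> \<le> (\<bar>lp\<bar> + \<bar>lm\<bar>) * \<bar>s - s'\<bar>"
proof (cases "sided_slope lp lm s = sided_slope lp lm s'")
  case True
  then have "\<bar>sided_linear lp lm s - sided_linear lp lm s'\<bar> = \<bar>sided_slope lp lm s\<bar> * \<bar>s - s'\<bar>"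
    by (simp add: sided_linear_def abs_mult[symmetric] right_diff_distrib)
  then show ?thesis by (simp add: mult_right_mono abs_sided_slope_le)
next
  case False
  then have opposite: "\<bar>s\<bar> \<le> \<bar>s - s'\<bar>" "\<bar>s'\<bar> \<le> \<bar>s - s'\<bar>" by (auto simp: sided_slope_def split: if_splits)
  have "\<bar>sided_linear lp lm s - sided_linear lp lm s'\<bar>
      \<le> \<bar>sided_slope lp lm s\<bar> * \<bar>s\<bar> + \<bar>sided_slope lp lm s'\<bar> * \<bar>s'\<bar>"
    unfolding sided_linear_def by (metis abs_mult abs_triangle_ineq4)
  also have "\<dots> \<le> \<bar>sided_slope lp lm s\<bar> * \<bar>s - s'\<bar> + \<bar>sided_slope lp lm s'\<bar> * \<bar>s - s'\<bar>"
    using opposite by (intro add_mono mult_left_mono) auto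
  also have "\<dots> = (\<bar>lp\<bar> + \<bar>lm\<bar>) * \<bar>s - s'\<bar>"
    using False by (auto simp: sided_slope_def algebra_simps)
  finally show ?thesis .
qed

lemma has_real_derivative_sided_linear:
  fixes z :: "real \<Rightarrow> real"
  assumes D: "(z has_real_derivative D) (at t)" and "z t \<noteq> 0 \<or> D = 0"
  shows "((\<lambda>r. sided_linear lp lm (z r)) has_real_derivative sided_slope lp lm (z t) * D) (at t)"
proof (cases "z t = 0")
  case False
  have "(z \<longlongrightarrow> z t) (nhds t)" using DERIV_isCont[OF D] by (simp add: isCont_def tendsto_at_iff_tendsto_nhds)
  have "eventually (\<lambda>r. 0 < z r \<longleftrightarrow> 0 < z t) (nhds t)"
  proof (cases "0 < z t")
    case True
    with order_tendstoD(1)[OF \<open>(z \<longlongrightarrow> z t) (nhds t)\<close>, of 0] show ?thesis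
      by (simp add: eventually_mono)
  next
    case False
    with \<open>z t \<noteq> 0\<close> have "z t < 0" by simp
    with order_tendstoD(2)[OF \<open>(z \<longlongrightarrow> z t) (nhds t)\<close>, of 0] show ?thesis
      using False by (auto elim: eventually_mono)
  qed
  then have "eventually (\<lambda>r. sided_linear lp lm (z r) = sided_slope lp lm (z t) * z r) (nhds t)"
    by eventually_elim (use False in \<open>auto simp: sided_linear_def sided_slope_def\<close>)
  moreover have "((\<lambda>r. sided_slope lp lm (z t) * z r) has_real_derivative sided_slope lp lm (z t) * D) (at t)"
    by (rule DERIV_cmult[OF D])
  ultimately show ?thesis by (subst DERIV_cong_ev) auto
next
  case True
  with assms(2) have "D = 0" by simp
  define L where "L = \<bar>lp\<bar> + \<bar>lm\<bar>"
  have "((\<lambda>r. (z r - z t) / (r - t)) \<longlongrightarrow> 0) (at t)" using D \<open>D = 0\<close> by (simp add: has_field_derivative_iff)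
  then have "((\<lambda>r. L * \<bar>(z r - z t) / (r - t)\<bar>) \<longlongrightarrow> 0) (at t)" by (intro tendsto_mult_right_zero tendsto_rabs_zero)
  then have "((\<lambda>r. (sided_linear lp lm (z r) - sided_linear lp lm (z t)) / (r - t)) \<longlongrightarrow> 0) (at t)"
  proof (rule Lim_null_comparison[rotated])
    have "\<bar>sided_linear lp lm (z r) - sided_linear lp lm (z t)\<bar> / \<bar>r - t\<bar> \<le> L * \<bar>z r - z t\<bar> / \<bar>r - t\<bar>" for r
      unfolding L_def by (intro divide_right_mono sided_linear_lipschitz) simp
    then show "\<forall>\<^sub>F r in at t. norm ((sided_linear lp lm (z r) - sided_linear lp lm (z t)) / (r - t))
        \<le> L * \<bar>(z r - z t) / (r - t)\<bar>"
      by (intro always_eventually) (simp add: abs_divide)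
  qed
  then show ?thesis using \<open>D = 0\<close> by (simp add: has_field_derivative_iff)
qed

definition output_lyapunov :: "('p::finite \<Rightarrow> real) \<Rightarrow> ('p \<Rightarrow> real) \<Rightarrow> ('p \<Rightarrow> real) \<Rightarrow> real^'p \<Rightarrow> real" where
  "output_lyapunov g lp lm y = (\<Sum>i\<in>UNIV. g i * sided_linear (lp i) (lm i) (y $ i))"

lemma has_real_derivative_output_lyapunov:
  fixes y :: "real \<Rightarrow> real^'p::finite"
  assumes "(y has_vector_derivative dy) (at t)" "\<And>i. y t $ i = 0 \<Longrightarrow> dy $ i = 0"
  shows "((\<lambda>r. output_lyapunov g lp lm (y r)) has_real_derivative
     (\<Sum>i\<in>UNIV. g i * (sided_slope (lp i) (lm i) (y t $ i) * dy $ i))) (at t)"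
  unfolding output_lyapunov_def
proof (intro DERIV_sum DERIV_cmult has_real_derivative_sided_linear)
  fix i
  show "((\<lambda>r. y r $ i) has_real_derivative dy $ i) (at t)"
    using bounded_linear.has_vector_derivative[OF bounded_linear_vec_nth assms(1)]
    by (simp add: has_real_derivative_iff_has_vector_derivative)
  show "y t $ i \<noteq> 0 \<or> dy $ i = 0" using assms(2) by blast
qed

locale lyapunov_weights =
  fixes g lp lm :: "'p::finite \<Rightarrow> real"
  assumes g_pos: "\<And>i. g i > 0" and lp_pos: "\<And>i. lp i > 0" and lm_neg: "\<And>i. lm i < 0"
begin

abbreviation V :: "real^'p \<Rightarrow> real" where
  "V \<equiv> output_lyapunov g lp lm"

lemma output_lyapunov_lower_bound:
  assumes "\<And>i. a \<le> lp i" "\<And>i. a \<le> - lm i" "a \<ge> 0"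
  shows "(MIN i. g i) * a * norm y \<le> output_lyapunov g lp lm y"
proof -
  have "(MIN i. g i) * a * norm y \<le> (MIN i. g i) * a * (\<Sum>i\<in>UNIV. \<bar>y$i\<bar>)"
    using assms g_pos by (intro mult_left_mono norm_le_l1_cart) (auto simp: less_imp_le)
  also have "\<dots> = (\<Sum>i\<in>UNIV. (MIN i. g i) * (a * \<bar>y$i\<bar>))" by (simp add: sum_distrib_left mult.assoc)
  also have "\<dots> \<le> output_lyapunov g lp lm y"
    unfolding output_lyapunov_def
    using assms g_pos sided_linear_lower_bound[OF assms(1,2)]
    by (intro sum_mono mult_mono) (auto simp: less_imp_le)
  finally show ?thesis .
qed

lemma output_lyapunov_nonneg: "output_lyapunov g lp lm y \<ge> 0"
  using output_lyapunov_lower_bound[of 0 y] lp_pos lm_neg by (simp add: less_imp_le)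

lemma output_lyapunov_eq_0_iff: "output_lyapunov g lp lm y = 0 \<longleftrightarrow> y = 0"
proof
  assume V0: "output_lyapunov g lp lm y = 0"
  define a where "a = (MIN i. min (lp i) (- lm i))"
  have "a > 0" using lp_pos lm_neg by (simp add: a_def)
  have "a \<le> min (lp i) (- lm i)" for i unfolding a_def by (rule Min_le) auto
  then have "(MIN i. g i) * a * norm y \<le> 0"
    using output_lyapunov_lower_bound[of a y] \<open>a > 0\<close> V0 by simp
  moreover have "(MIN i. g i) * a > 0" using g_pos \<open>a > 0\<close> by simp
  ultimately have "norm y \<le> 0" by (metis mult_le_0_iff not_le)
  then show "y = 0" by simp
qed (simp add: output_lyapunov_def sided_linear_def)

lemma output_lyapunov_upper_bound:
  "output_lyapunov g lp lm y \<le> (\<Sum>i\<in>UNIV. g i * (\<bar>lp i\<bar> + \<bar>lm i\<bar>)) * norm y"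
proof -
  have "output_lyapunov g lp lm y \<le> (\<Sum>i\<in>UNIV. g i * (\<bar>lp i\<bar> + \<bar>lm i\<bar>) * norm y)"
    unfolding output_lyapunov_def
  proof (rule sum_mono)
    fix i
    have "sided_linear (lp i) (lm i) (y$i) \<le> (\<bar>lp i\<bar> + \<bar>lm i\<bar>) * \<bar>y$i\<bar>"
      by (rule sided_linear_upper_bound)
    also have "\<dots> \<le> (\<bar>lp i\<bar> + \<bar>lm i\<bar>) * norm y" by (intro mult_left_mono component_le_norm_cart) simp
    finally have "sided_linear (lp i) (lm i) (y$i) \<le> (\<bar>lp i\<bar> + \<bar>lm i\<bar>) * norm y" .
    then show "g i * sided_linear (lp i) (lm i) (y $ i) \<le> g i * (\<bar>lp i\<bar> + \<bar>lm i\<bar>) * norm y"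
      using g_pos[of i] by (simp add: mult.assoc)
  qed
  then show ?thesis by (simp add: sum_distrib_right)
qed

lemma output_lyapunov_lipschitz:
  "\<bar>output_lyapunov g lp lm y - output_lyapunov g lp lm y'\<bar> \<le> (\<Sum>i\<in>UNIV. g i * (\<bar>lp i\<bar> + \<bar>lm i\<bar>)) * norm (y - y')"
proof -
  have "\<bar>output_lyapunov g lp lm y - output_lyapunov g lp lm y'\<bar>
      \<le> (\<Sum>i\<in>UNIV. \<bar>g i * (sided_linear (lp i) (lm i) (y$i) - sided_linear (lp i) (lm i) (y'$i))\<bar>)"
    unfolding output_lyapunov_def by (simp add: sum_subtractf[symmetric] right_diff_distrib)
  also have "\<dots> \<le> (\<Sum>i\<in>UNIV. g i * (\<bar>lp i\<bar> + \<bar>lm i\<bar>) * norm (y - y'))"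
  proof (rule sum_mono)
    fix i
    have "\<bar>sided_linear (lp i) (lm i) (y$i) - sided_linear (lp i) (lm i) (y'$i)\<bar> \<le> (\<bar>lp i\<bar> + \<bar>lm i\<bar>) * \<bar>y$i - y'$i\<bar>"
      by (rule sided_linear_lipschitz)
    also have "\<dots> \<le> (\<bar>lp i\<bar> + \<bar>lm i\<bar>) * norm (y - y')"
      using component_le_norm_cart[of "y - y'" i] by (intro mult_left_mono) auto
    finally have "\<bar>sided_linear (lp i) (lm i) (y$i) - sided_linear (lp i) (lm i) (y'$i)\<bar> \<le> (\<bar>lp i\<bar> + \<bar>lm i\<bar>) * norm (y - y')" .
    then show "\<bar>g i * (sided_linear (lp i) (lm i) (y$i) - sided_linear (lp i) (lm i) (y'$i))\<bar>
        \<le> g i * (\<bar>lp i\<bar> + \<bar>lm i\<bar>) * norm (y - y')"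
      using g_pos[of i] by (simp add: abs_mult mult.assoc)
  qed
  finally show ?thesis by (simp add: sum_distrib_right)
qed

end

section \<open>Decrease of the Lyapunov function near the origin\<close>

lemma weighted_sum_le_bound:
  fixes u v g :: "'i \<Rightarrow> real"
  assumes "\<And>i. g i \<ge> 0" "\<And>i. \<bar>u i\<bar> \<le> U" "\<And>i. \<bar>v i\<bar> \<le> V"
  shows "(\<Sum>i\<in>S. g i * u i * v i) \<le> (\<Sum>i\<in>S. g i) * U * V"
proof -
  have "g i * u i * v i \<le> g i * (U * V)" for i
  proof -
    have "u i * v i \<le> \<bar>u i\<bar> * \<bar>v i\<bar>" by (metis abs_ge_self abs_mult)
    also have "\<dots> \<le> U * V" using assms(2,3) by (intro mult_mono) (auto intro: order_trans[OF abs_ge_zero])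
    finally show ?thesis using assms(1) by (simp add: mult.assoc mult_left_mono)
  qed
  then have "(\<Sum>i\<in>S. g i * u i * v i) \<le> (\<Sum>i\<in>S. g i * (U * V))" by (rule sum_mono)
  then show ?thesis by (simp add: sum_distrib_right mult.assoc)
qed

lemma abs_matrix_vector_mult_nth_le:
  fixes M :: "real^'n::finite^'m::finite"
  assumes "\<And>j. \<bar>v$j\<bar> \<le> \<eta>"
  shows "\<bar>(M *v v)$i\<bar> \<le> (\<Sum>i\<in>UNIV. \<Sum>j\<in>UNIV. \<bar>M$i$j\<bar>) * \<eta>"
proof -
  have "\<eta> \<ge> 0" using assms[of undefined] by linarith
  have "\<bar>(M *v v)$i\<bar> \<le> (\<Sum>j\<in>UNIV. \<bar>M$i$j\<bar> * \<eta>)"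
    unfolding matrix_vector_mult_def using assms
    by (auto intro!: order_trans[OF sum_abs] sum_mono simp: abs_mult mult_left_mono)
  also have "\<dots> \<le> (\<Sum>i\<in>UNIV. \<Sum>j\<in>UNIV. \<bar>M$i$j\<bar>) * \<eta>"
    unfolding sum_distrib_right[symmetric] using \<open>\<eta> \<ge> 0\<close>
    by (intro mult_right_mono member_le_sum) (auto intro: sum_nonneg)
  finally show ?thesis .
qed

lemma sided_slope_descent:
  fixes M :: "real^'p::finite^'p" and y w d :: "real^'p"
  assumes g: "\<And>i. g i > 0" and coercive: "\<And>v. m * (norm v)^2 \<le> (\<Sum>i\<in>UNIV. g i * v$i * (M *v v)$i)"
    and "m \<ge> 0" and a: "\<And>i. a \<le> lp i" "\<And>i. a \<le> - lm i" "a \<ge> 0"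
    and U: "\<And>i. \<bar>lp i\<bar> \<le> U" "\<And>i. \<bar>lm i\<bar> \<le> U"
    and "y \<noteq> 0" and "\<eta> \<ge> 0"
    and w: "\<And>i. y$i > 0 \<Longrightarrow> \<bar>w$i - lp i\<bar> \<le> \<eta>" "\<And>i. y$i < 0 \<Longrightarrow> \<bar>w$i - lm i\<bar> \<le> \<eta>" "\<And>i. \<bar>w$i\<bar> \<le> U"
    and zero: "\<And>i. y$i = 0 \<Longrightarrow> (d - M *v w)$i = 0"
  shows "(\<Sum>i\<in>UNIV. g i * (sided_slope (lp i) (lm i) (y$i) * (d - M *v w)$i))
      \<le> (\<Sum>i\<in>UNIV. g i) * U * (norm d + (\<Sum>i\<in>UNIV. \<Sum>j\<in>UNIV. \<bar>M$i$j\<bar>) * \<eta>) - m * a^2"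
proof -
  \<comment> \<open>Where \<open>y\<close> vanishes the summand is zero anyway, so there \<open>u\<close> may copy \<open>w\<close>;
      this makes \<open>w - u\<close> small in every component.\<close>
  define u where "u = (\<chi> i. if y$i = 0 then w$i else sided_slope (lp i) (lm i) (y$i))"
  define e where "e = w - u"
  define Ms where "Ms = (\<Sum>i\<in>UNIV. \<Sum>j\<in>UNIV. \<bar>M$i$j\<bar>)"
  have g0: "g i \<ge> 0" for i using g[of i] by simp
  have u: "\<bar>u$i\<bar> \<le> U" for i using w(3) U by (simp add: u_def sided_slope_def)
  have e: "\<bar>e$i\<bar> \<le> \<eta>" for i
    using w(1,2)[of i] \<open>\<eta> \<ge> 0\<close> by (cases "y$i" "0::real" rule: linorder_cases) (auto simp: e_def u_def sided_slope_def)
  have Me: "\<bar>(- (M *v e))$i\<bar> \<le> Ms * \<eta>" for i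
    using abs_matrix_vector_mult_nth_le[of e \<eta> M i] e by (simp add: Ms_def)
  have "m * a^2 \<le> m * (norm u)^2"
  proof -
    obtain j where "y$j \<noteq> 0" using \<open>y \<noteq> 0\<close> by (metis vec_eq_iff zero_index)
    then have "a \<le> \<bar>u$j\<bar>" using a(1)[of j] a(2)[of j] by (auto simp: u_def sided_slope_def)
    also have "\<dots> \<le> norm u" by (rule component_le_norm_cart)
    finally show ?thesis using \<open>a \<ge> 0\<close> \<open>m \<ge> 0\<close> by (intro mult_left_mono power_mono) auto
  qed
  also have "\<dots> \<le> (\<Sum>i\<in>UNIV. g i * u$i * (M *v u)$i)" by (rule coercive)
  finally have Mu: "m * a^2 \<le> (\<Sum>i\<in>UNIV. g i * u$i * (M *v u)$i)" .
  have "(\<Sum>i\<in>UNIV. g i * (sided_slope (lp i) (lm i) (y$i) * (d - M *v w)$i))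
      = (\<Sum>i\<in>UNIV. g i * u$i * d$i) + (\<Sum>i\<in>UNIV. g i * u$i * (- (M *v e))$i) - (\<Sum>i\<in>UNIV. g i * u$i * (M *v u)$i)"
  proof -
    have "(\<Sum>i\<in>UNIV. g i * (sided_slope (lp i) (lm i) (y$i) * (d - M *v w)$i)) = (\<Sum>i\<in>UNIV. g i * u$i * (d - M *v w)$i)"
      using zero by (intro sum.cong) (auto simp: u_def)
    also have "\<dots> = (\<Sum>i\<in>UNIV. g i * u$i * d$i) + (\<Sum>i\<in>UNIV. g i * u$i * (- (M *v e))$i) - (\<Sum>i\<in>UNIV. g i * u$i * (M *v u)$i)"
      by (simp add: e_def matrix_vector_mult_diff_distrib algebra_simps sum_subtractf sum.distrib)
    finally show ?thesis .
  qed
  also have "\<dots> \<le> (\<Sum>i\<in>UNIV. g i) * U * norm d + (\<Sum>i\<in>UNIV. g i) * U * (Ms * \<eta>) - m * a^2"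
    using weighted_sum_le_bound[of g "\<lambda>i. u$i" U "\<lambda>i. d$i" "norm d" UNIV, OF g0 u component_le_norm_cart]
      weighted_sum_le_bound[of g "\<lambda>i. u$i" U "\<lambda>i. (- (M *v e))$i" "Ms * \<eta>" UNIV, OF g0 u Me] Mu
    by linarith
  finally show ?thesis by (simp add: Ms_def algebra_simps)
qed

lemma Psi_set_near_zero:
  assumes lp: "\<And>i. (\<psi> i \<longlongrightarrow> lp i) (at_right 0)" and lm: "\<And>i. (\<psi> i \<longlongrightarrow> lm i) (at_left 0)" and "\<eta> > 0"
  obtains \<epsilon> where "\<epsilon> > 0" "\<And>y w i. norm y < \<epsilon> \<Longrightarrow> w \<in> Psi_set \<psi> y \<Longrightarrow>
     (y$i > 0 \<longrightarrow> \<bar>w$i - lp i\<bar> \<le> \<eta>) \<and> (y$i < 0 \<longrightarrow> \<bar>w$i - lm i\<bar> \<le> \<eta>) \<and>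
     \<bar>w$i\<bar> \<le> \<bar>lp i\<bar> + \<bar>lm i\<bar> + \<eta> + \<bar>\<psi> i 0\<bar>"
proof -
  define near where "near i e \<longleftrightarrow> e > 0 \<and> (\<forall>s w. \<bar>s\<bar> < e \<longrightarrow> w \<in> krasovskii (\<psi> i) s \<longrightarrow>
     (s > 0 \<longrightarrow> \<bar>w - lp i\<bar> \<le> \<eta>) \<and> (s < 0 \<longrightarrow> \<bar>w - lm i\<bar> \<le> \<eta>) \<and> \<bar>w\<bar> \<le> \<bar>lp i\<bar> + \<bar>lm i\<bar> + \<eta> + \<bar>\<psi> i 0\<bar>)"
    for i e
  have "\<exists>e. near i e" for i
    using krasovskii_near_zero[OF lp lm \<open>\<eta> > 0\<close>] unfolding near_def by metis
  then obtain e where e: "\<And>i. near i (e i)" by metis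
  define \<epsilon> where "\<epsilon> = (MIN i. e i)"
  have "\<epsilon> > 0" using e by (simp add: \<epsilon>_def near_def)
  moreover have "(y$i > 0 \<longrightarrow> \<bar>w$i - lp i\<bar> \<le> \<eta>) \<and> (y$i < 0 \<longrightarrow> \<bar>w$i - lm i\<bar> \<le> \<eta>) \<and>
     \<bar>w$i\<bar> \<le> \<bar>lp i\<bar> + \<bar>lm i\<bar> + \<eta> + \<bar>\<psi> i 0\<bar>" if "norm y < \<epsilon>" "w \<in> Psi_set \<psi> y" for y w i
  proof -
    have "\<epsilon> \<le> e i" unfolding \<epsilon>_def by (rule Min_le) auto
    then have "\<bar>y$i\<bar> < e i" using component_le_norm_cart[of y i] that(1) by linarith
    moreover have "w$i \<in> krasovskii (\<psi> i) (y$i)" using that(2) by (simp add: Psi_set_def)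
    ultimately show ?thesis using e[of i] unfolding near_def by blast
  qed
  ultimately show ?thesis using that by blast
qed

lemma exists_small_pos:
  fixes k b :: real
  assumes "k \<ge> 0" "b > 0"
  obtains x where "x > 0" "x \<le> 1" "k * x \<le> b"
proof
  have "k * (b / (k + 1)) \<le> b" using assms by (simp add: field_simps)
  moreover have "k * min 1 (b / (k + 1)) \<le> k * (b / (k + 1))" using assms(1) by (intro mult_left_mono) auto
  ultimately show "k * min 1 (b / (k + 1)) \<le> b" by linarith
qed (use assms in auto)


text \<open>The side condition on vanishing output components holds at almost every time along a
  solution: a function has a nonzero derivative only at isolated points of its zero set.\<close>
locale lure_output_lyapunov = lyapunov_weights g lp lm
  for g lp lm :: "'p::finite \<Rightarrow> real" +
  fixes A :: "real^'n::finite^'n" and B :: "real^'p^'n" and C :: "real^'n^'p"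
    and \<psi> :: "'p \<Rightarrow> real \<Rightarrow> real" and \<rho> c :: real
  assumes radius_pos: "\<rho> > 0" and rate_pos: "c > 0"
    and decrease: "\<And>z w. norm z \<le> \<rho> \<Longrightarrow> C *v z \<noteq> 0 \<Longrightarrow> w \<in> Psi_set \<psi> (C *v z) \<Longrightarrow>
      (\<And>i. (C *v z)$i = 0 \<Longrightarrow> (C *v (A *v z - B *v w))$i = 0) \<Longrightarrow>
      (\<Sum>i\<in>UNIV. g i * (sided_slope (lp i) (lm i) ((C *v z)$i) * (C *v (A *v z - B *v w))$i)) \<le> - c"

lemma lure_output_lyapunov_exists:
  fixes A :: "real^'n::finite^'n" and B :: "real^'p::finite^'n" and C :: "real^'n^'p"
  assumes "lyap_diag_stable (C ** B)"
    and lp: "\<And>i. (\<psi> i \<longlongrightarrow> lp i) (at_right 0)" "\<And>i. lp i > 0"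
    and lm: "\<And>i. (\<psi> i \<longlongrightarrow> lm i) (at_left 0)" "\<And>i. lm i < 0"
  obtains g \<rho> c where "lure_output_lyapunov g lp lm A B C \<psi> \<rho> c"
proof -
  obtain g m where g: "\<And>i. g i > 0" and "m > 0"
    and coercive: "\<And>v. m * (norm v)^2 \<le> (\<Sum>i\<in>UNIV. g i * v$i * ((C ** B) *v v)$i)"
    using lyap_diag_stable_lower_bound[OF assms(1)] by blast
  define a where "a = (MIN i. min (lp i) (- lm i))"
  have "a > 0" using lp(2) lm(2) by (simp add: a_def)
  have a: "a \<le> lp i" "a \<le> - lm i" for i
    using Min_le[of "range (\<lambda>i. min (lp i) (- lm i))" "min (lp i) (- lm i)"] by (auto simp: a_def)
  define U where "U = (\<Sum>i\<in>UNIV. \<bar>lp i\<bar> + \<bar>lm i\<bar> + 1 + \<bar>\<psi> i 0\<bar>)"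
  have U: "\<bar>lp i\<bar> + \<bar>lm i\<bar> + 1 + \<bar>\<psi> i 0\<bar> \<le> U" for i
    unfolding U_def by (rule member_le_sum) auto
  define K where "K = (\<Sum>i\<in>UNIV. g i) * U"
  define Ms where "Ms = (\<Sum>i\<in>UNIV. \<Sum>j\<in>UNIV. \<bar>(C ** B)$i$j\<bar>)"
  have "U \<ge> 0" using U[of undefined] by linarith
  then have "K \<ge> 0" unfolding K_def using g by (simp add: sum_nonneg less_imp_le)
  have "Ms \<ge> 0" unfolding Ms_def by (simp add: sum_nonneg)
  define c where "c = m * a^2 / 2"
  have "c > 0" using \<open>m > 0\<close> \<open>a > 0\<close> by (simp add: c_def)
  obtain \<eta> where "\<eta> > 0" "\<eta> \<le> 1" "K * Ms * \<eta> \<le> c / 2"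
    using exists_small_pos[of "K * Ms" "c / 2"] \<open>K \<ge> 0\<close> \<open>Ms \<ge> 0\<close> \<open>c > 0\<close> by auto
  obtain \<epsilon> where "\<epsilon> > 0" and near: "\<And>y w i. norm y < \<epsilon> \<Longrightarrow> w \<in> Psi_set \<psi> y \<Longrightarrow>
      (y$i > 0 \<longrightarrow> \<bar>w$i - lp i\<bar> \<le> \<eta>) \<and> (y$i < 0 \<longrightarrow> \<bar>w$i - lm i\<bar> \<le> \<eta>) \<and>
      \<bar>w$i\<bar> \<le> \<bar>lp i\<bar> + \<bar>lm i\<bar> + \<eta> + \<bar>\<psi> i 0\<bar>"
    using Psi_set_near_zero[where \<psi>=\<psi> and lp=lp and lm=lm, OF lp(1) lm(1) \<open>\<eta> > 0\<close>] by blast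
  obtain KC where "KC \<ge> 0" and KC: "\<And>v. norm (C *v v) \<le> norm v * KC"
    using bounded_linear.nonneg_bounded[of "\<lambda>v. C *v v"] by (auto simp: linear_linear)
  obtain KA where "KA \<ge> 0" and KA: "\<And>v. norm ((C ** A) *v v) \<le> norm v * KA"
    using bounded_linear.nonneg_bounded[of "\<lambda>v. (C ** A) *v v"] by (auto simp: linear_linear)
  have "KC + K * KA \<ge> 0" using \<open>KC \<ge> 0\<close> \<open>K \<ge> 0\<close> \<open>KA \<ge> 0\<close> by simp
  then obtain \<rho> where "\<rho> > 0" and \<rho>: "(KC + K * KA) * \<rho> \<le> min (\<epsilon> / 2) (c / 2)"
    using exists_small_pos[of "KC + K * KA" "min (\<epsilon> / 2) (c / 2)"] \<open>\<epsilon> > 0\<close> \<open>c > 0\<close> by auto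
  moreover have "K * KA * \<rho> \<ge> 0" "KC * \<rho> \<ge> 0" using \<open>\<rho> > 0\<close> \<open>KC \<ge> 0\<close> \<open>K \<ge> 0\<close> \<open>KA \<ge> 0\<close> by simp_all
  ultimately have "KC * \<rho> < \<epsilon>" "K * KA * \<rho> \<le> c / 2" using \<open>\<epsilon> > 0\<close> by (simp_all add: distrib_right)
  have "(\<Sum>i\<in>UNIV. g i * (sided_slope (lp i) (lm i) ((C *v z)$i) * (C *v (A *v z - B *v w))$i)) \<le> - c"
    if z: "norm z \<le> \<rho>" "C *v z \<noteq> 0" "w \<in> Psi_set \<psi> (C *v z)"
      and zero: "\<And>i. (C *v z)$i = 0 \<Longrightarrow> (C *v (A *v z - B *v w))$i = 0" for z w
  proof -
    have split: "C *v (A *v z - B *v w) = (C ** A) *v z - (C ** B) *v w"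
      by (simp add: matrix_vector_mult_diff_distrib matrix_vector_mul_assoc)
    have "norm (C *v z) < \<epsilon>"
      using KC[of z] z(1) \<open>KC \<ge> 0\<close> \<open>KC * \<rho> < \<epsilon>\<close> mult_left_mono[of "norm z" \<rho> KC] by (simp add: mult.commute)
    note w = near[OF this z(3)]
    have "(\<Sum>i\<in>UNIV. g i * (sided_slope (lp i) (lm i) ((C *v z)$i) * ((C ** A) *v z - (C ** B) *v w)$i))
        \<le> K * (norm ((C ** A) *v z) + Ms * \<eta>) - m * a^2"
      unfolding K_def Ms_def
    proof (rule sided_slope_descent[OF g coercive less_imp_le[OF \<open>m > 0\<close>] a _ _ _ z(2) less_imp_le[OF \<open>\<eta> > 0\<close>]])
      show "\<bar>lp i\<bar> \<le> U" "\<bar>lm i\<bar> \<le> U" for i using U[of i] by linarith+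
      show "\<bar>w$i\<bar> \<le> U" for i using w[of i] U[of i] \<open>\<eta> \<le> 1\<close> by linarith
    qed (use w zero split less_imp_le[OF \<open>a > 0\<close>] in auto)
    also have "\<dots> \<le> K * KA * \<rho> + K * Ms * \<eta> - m * a^2"
    proof -
      have "norm ((C ** A) *v z) \<le> KA * \<rho>"
        using KA[of z] mult_left_mono[OF z(1) \<open>KA \<ge> 0\<close>] by (simp add: mult.commute)
      then have "K * norm ((C ** A) *v z) \<le> K * KA * \<rho>"
        using mult_left_mono[OF _ \<open>K \<ge> 0\<close>] by (simp add: mult.assoc)
      then show ?thesis by (simp add: algebra_simps)
    qed
    also have "\<dots> \<le> - c"
      using \<open>K * KA * \<rho> \<le> c / 2\<close> \<open>K * Ms * \<eta> \<le> c / 2\<close> by (simp add: c_def)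
    finally show ?thesis using split by simp
  qed
  then have "lure_output_lyapunov g lp lm A B C \<psi> \<rho> c"
    using g lp(2) lm(2) \<open>\<rho> > 0\<close> \<open>c > 0\<close> by unfold_locales blast+
  then show ?thesis using that by blast
qed

lemma class_KL_scale:
  assumes "class_KL \<beta>" "k > 0"
  shows "class_KL (\<lambda>r t. k * \<beta> r t)"
  using assms unfolding class_KL_def class_K_def strict_mono_on_def monotone_on_def
  by (auto intro: continuous_intros tendsto_mult_right_zero)

lemma class_KL_exp_decay:
  assumes "k > 0" "b > 0"
  shows "class_KL (\<lambda>r t. k * r * exp (- (b * t)))"
  unfolding class_KL_def class_K_def
proof (intro conjI allI impI)
  fix t :: real
  show "continuous_on {0..} (\<lambda>r. k * r * exp (- (b * t)))" by (intro continuous_intros)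
  show "strict_mono_on {0..} (\<lambda>r. k * r * exp (- (b * t)))"
    using \<open>k > 0\<close> by (intro strict_mono_onI) (simp add: mult_strict_right_mono)
next
  fix r :: real assume "r \<ge> 0"
  show "antimono_on {0..} (\<lambda>t. k * r * exp (- (b * t)))"
    using \<open>k > 0\<close> \<open>b > 0\<close> \<open>r \<ge> 0\<close> by (intro monotone_onI mult_left_mono) auto
  have "filterlim (\<lambda>t. b * t) at_top at_top"
    by (rule filterlim_tendsto_pos_mult_at_top[OF tendsto_const \<open>b > 0\<close> filterlim_ident])
  then have "((\<lambda>t. exp (- (b * t))) \<longlongrightarrow> 0) at_top"
    by (intro filterlim_compose[OF exp_at_bot]) (simp add: filterlim_uminus_at_top[symmetric])
  then show "((\<lambda>t. k * r * exp (- (b * t))) \<longlongrightarrow> 0) at_top" by (rule tendsto_mult_right_zero)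
qed simp

lemma linear_decay_le_exp_decay:
  fixes k c y Y t :: real
  assumes "k > 0" "c > 0" "0 \<le> y" "y \<le> Y" "t \<ge> 0"
  shows "max (k * y - c * t) 0 \<le> k * y * exp (- (c / (k * Y) * t))"
proof (cases "k * y - c * t \<le> 0")
  case False
  then have "y > 0" using assms by (auto simp: le_less)
  have "c / (k * Y) * t \<le> c * t / (k * y)"
    using assms \<open>y > 0\<close> by (simp add: divide_left_mono mult_left_mono mult_right_mono)
  then have "k * y - c * t \<le> k * y * (1 - c / (k * Y) * t)"
    using assms \<open>y > 0\<close> by (simp add: field_simps mult_left_mono)
  also have "\<dots> \<le> k * y * exp (- (c / (k * Y) * t))"
    using exp_ge_add_one_self[of "- (c / (k * Y) * t)"] assms \<open>y > 0\<close> by (intro mult_left_mono) auto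
  finally show ?thesis using False by simp
qed (use assms in simp)

lemma GAS_imp_oGAS:
  assumes "GAS F" "bounded_linear h"
  shows "oGAS F h"
proof -
  obtain \<beta> where "forward_complete F" "class_KL \<beta>"
    and \<beta>: "\<And>x I t. is_solution F x I \<Longrightarrow> t \<in> I \<Longrightarrow> norm (x t) \<le> \<beta> (norm (x 0)) t"
    using assms(1) unfolding GAS_def by blast
  obtain K where "K \<ge> 0" and K: "\<And>v. norm (h v) \<le> norm v * K"
    using bounded_linear.nonneg_bounded[OF assms(2)] by blast
  have "norm (h (x t)) \<le> (K + 1) * \<beta> (norm (x 0)) t" if "is_solution F x I" "t \<in> I" for x I t
  proof -
    have "norm (h (x t)) \<le> K * norm (x t)" using K[of "x t"] by (simp add: mult.commute)
    also have "\<dots> \<le> (K + 1) * norm (x t)" by (simp add: distrib_right)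
    also have "\<dots> \<le> (K + 1) * \<beta> (norm (x 0)) t" using \<beta>[OF that] \<open>K \<ge> 0\<close> by simp
    finally show ?thesis .
  qed
  moreover have "class_KL (\<lambda>r t. (K + 1) * \<beta> r t)" using class_KL_scale \<open>class_KL \<beta>\<close> \<open>K \<ge> 0\<close> by simp
  ultimately show ?thesis using \<open>forward_complete F\<close> unfolding oGAS_def by blast
qed

lemma GAS_eventually_small:
  assumes "GAS F" "is_solution F x I" "\<rho> > 0"
  obtains T where "T \<ge> 0" "\<And>t. t \<in> I \<Longrightarrow> T \<le> t \<Longrightarrow> norm (x t) < \<rho>"
proof -
  obtain \<beta> where "class_KL \<beta>" and \<beta>: "\<And>t. t \<in> I \<Longrightarrow> norm (x t) \<le> \<beta> (norm (x 0)) t"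
    using assms(1,2) unfolding GAS_def by blast
  then have "((\<lambda>t. \<beta> (norm (x 0)) t) \<longlongrightarrow> 0) at_top" unfolding class_KL_def by simp
  then have "eventually (\<lambda>t. \<beta> (norm (x 0)) t < \<rho>) at_top" using \<open>\<rho> > 0\<close> by (rule order_tendstoD(2))
  then obtain T where "\<And>t. T \<le> t \<Longrightarrow> \<beta> (norm (x 0)) t < \<rho>"
    unfolding eventually_at_top_linorder by blast
  then have "norm (x t) < \<rho>" if "t \<in> I" "max T 0 \<le> t" for t using \<beta>[OF that(1)] that(2) by force
  then show ?thesis using that[of "max T 0"] by simp
qed

lemma GAS_small_initial:
  assumes "GAS F" "\<rho> > 0"
  obtains r where "r > 0" "\<And>x I t. is_solution F x I \<Longrightarrow> norm (x 0) < r \<Longrightarrow> t \<in> I \<Longrightarrow> norm (x t) < \<rho>"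
proof -
  obtain \<beta> where KL: "class_KL \<beta>"
    and \<beta>: "\<And>x I t. is_solution F x I \<Longrightarrow> t \<in> I \<Longrightarrow> norm (x t) \<le> \<beta> (norm (x 0)) t"
    using assms(1) unfolding GAS_def by blast
  then have "continuous_on {0..} (\<lambda>s. \<beta> s 0)" "\<beta> 0 0 = 0" unfolding class_KL_def class_K_def by auto
  then obtain r where "r > 0" and r: "\<And>s. s \<ge> 0 \<Longrightarrow> s < r \<Longrightarrow> \<beta> s 0 < \<rho>"
    using \<open>\<rho> > 0\<close> unfolding continuous_on_iff by (force simp: dist_real_def)
  have "norm (x t) < \<rho>" if sol: "is_solution F x I" "norm (x 0) < r" "t \<in> I" for x I t
  proof -
    have "t \<ge> 0" using sol(1,3) unfolding is_solution_def by auto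
    moreover have "antimono_on {0..} (\<beta> (norm (x 0)))" using KL unfolding class_KL_def by simp
    ultimately have "\<beta> (norm (x 0)) t \<le> \<beta> (norm (x 0)) 0" by (simp add: monotone_on_def)
    then show ?thesis using \<beta>[OF sol(1,3)] r[of "norm (x 0)"] sol(2) by force
  qed
  with \<open>r > 0\<close> show ?thesis using that by blast
qed

lemma is_solution_segment:
  assumes "is_solution F x I" "a \<in> I" "b \<in> I"
  shows "{a..b} \<subseteq> I"
proof -
  have "is_interval I" using assms(1) unfolding is_solution_def by (rule conjunct1)
  then show ?thesis using assms(2,3) unfolding is_interval_1 by fastforce
qed

lemma lure_solution_output_derivative:
  fixes x :: "real \<Rightarrow> real^'n::finite"
  assumes "is_solution (lure_F A B C \<psi>) x I"
  obtains N where "negligible N"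
    "\<And>r. r \<in> interior I - N \<Longrightarrow> \<exists>w\<in>Psi_set \<psi> (C *v x r).
       ((\<lambda>t. C *v x t) has_vector_derivative C *v (A *v x r - B *v w)) (at r) \<and>
       (\<forall>i. (C *v x r)$i = 0 \<longrightarrow> (C *v (A *v x r - B *v w))$i = 0)"
proof -
  obtain N where "negligible N"
    and der: "\<And>r. r \<in> I - N \<Longrightarrow> \<exists>v. (x has_vector_derivative v) (at r within I) \<and> v \<in> lure_F A B C \<psi> (x r)"
    using assms unfolding is_solution_def by blast
  define Z where "Z = (\<Union>i. {r. (C *v x r)$i = 0 \<and> (\<exists>D. ((\<lambda>r. (C *v x r)$i) has_real_derivative D) (at r) \<and> D \<noteq> 0)})"
  have "countable {r. (C *v x r)$i = 0 \<and> (\<exists>D. ((\<lambda>r. (C *v x r)$i) has_real_derivative D) (at r) \<and> D \<noteq> 0)}" for i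
    using countable_zeros_with_nonzero_derivative[of "\<lambda>r. (C *v x r)$i"] by simp
  then have "countable Z" unfolding Z_def by (intro countable_UN[OF countable_finite[OF finite_class.finite_UNIV]])
  then have "negligible (\<Union>((\<lambda>r. {r}) ` Z))" by (intro negligible_countable_Union) auto
  moreover have "\<Union>((\<lambda>r. {r}) ` Z) = Z" by blast
  ultimately have "negligible (N \<union> Z)" using negligible_Un[OF \<open>negligible N\<close>] by simp
  moreover have "\<exists>w\<in>Psi_set \<psi> (C *v x r).
       ((\<lambda>t. C *v x t) has_vector_derivative C *v (A *v x r - B *v w)) (at r) \<and>
       (\<forall>i. (C *v x r)$i = 0 \<longrightarrow> (C *v (A *v x r - B *v w))$i = 0)"
    if r: "r \<in> interior I - (N \<union> Z)" for r
  proof -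
    have "r \<in> I - N" using r interior_subset by blast
    then obtain v where v: "(x has_vector_derivative v) (at r within I)" "v \<in> lure_F A B C \<psi> (x r)"
      using der by blast
    obtain w where vw: "v = A *v x r - B *v w" and w: "w \<in> Psi_set \<psi> (C *v x r)"
      using v(2) unfolding lure_F_def by blast
    have "(x has_vector_derivative v) (at r)" using v(1) at_within_interior[of r I] r by simp
    then have y': "((\<lambda>t. C *v x t) has_vector_derivative C *v (A *v x r - B *v w)) (at r)"
      using bounded_linear.has_vector_derivative[of "\<lambda>v. C *v v"] vw by (simp add: linear_linear)
    have zero: "(C *v (A *v x r - B *v w))$i = 0" if "(C *v x r)$i = 0" for i
    proof (rule ccontr)
      have "((\<lambda>t. (C *v x t)$i) has_real_derivative (C *v (A *v x r - B *v w))$i) (at r)"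
        using bounded_linear.has_vector_derivative[OF bounded_linear_vec_nth y']
        by (simp add: has_real_derivative_iff_has_vector_derivative)
      moreover assume "(C *v (A *v x r - B *v w))$i \<noteq> 0"
      ultimately have "r \<in> Z" using that unfolding Z_def by blast
      with r show False by blast
    qed
    show ?thesis using zero by (intro bexI[OF _ w] conjI y') blast
  qed
  ultimately show ?thesis by (rule that)
qed

context lure_output_lyapunov
begin

lemma output_lyapunov_decreasing_along_solution:
  assumes sol: "is_solution (lure_F A B C \<psi>) x I"
  obtains N where "negligible N"
    "\<And>r. r \<in> interior I - N \<Longrightarrow> norm (x r) \<le> \<rho> \<Longrightarrow> C *v x r \<noteq> 0 \<Longrightarrow>
       \<exists>D. ((\<lambda>t. V (C *v x t)) has_real_derivative D) (at r) \<and> D \<le> - c"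
proof -
  obtain N where "negligible N" and der: "\<And>r. r \<in> interior I - N \<Longrightarrow> \<exists>w\<in>Psi_set \<psi> (C *v x r).
       ((\<lambda>t. C *v x t) has_vector_derivative C *v (A *v x r - B *v w)) (at r) \<and>
       (\<forall>i. (C *v x r)$i = 0 \<longrightarrow> (C *v (A *v x r - B *v w))$i = 0)"
    using lure_solution_output_derivative[OF sol] by blast
  have deriv: "\<exists>D. ((\<lambda>t. V (C *v x t)) has_real_derivative D) (at r) \<and> D \<le> - c"
    if r: "r \<in> interior I - N" "norm (x r) \<le> \<rho>" "C *v x r \<noteq> 0" for r
  proof -
    obtain w where w: "w \<in> Psi_set \<psi> (C *v x r)"
      and y': "((\<lambda>t. C *v x t) has_vector_derivative C *v (A *v x r - B *v w)) (at r)"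
      and zero: "\<forall>i. (C *v x r)$i = 0 \<longrightarrow> (C *v (A *v x r - B *v w))$i = 0"
      using der[OF r(1)] by blast
    define D where "D = (\<Sum>i\<in>UNIV. g i * (sided_slope (lp i) (lm i) ((C *v x r)$i) * (C *v (A *v x r - B *v w))$i))"
    have "D \<le> - c" unfolding D_def using decrease[OF r(2,3) w] zero by blast
    moreover have "((\<lambda>t. V (C *v x t)) has_real_derivative D) (at r)"
      unfolding D_def using has_real_derivative_output_lyapunov[OF y'] zero by blast
    ultimately show ?thesis by blast
  qed
  show ?thesis by (rule that[OF \<open>negligible N\<close> deriv])
qed

lemma output_lyapunov_lipschitz_output:
  obtains L where "L \<ge> 0" "\<And>z z'. \<bar>V (C *v z) - V (C *v z')\<bar> \<le> L * norm (z - z')"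
proof -
  define L1 where "L1 = (\<Sum>i\<in>UNIV. g i * (\<bar>lp i\<bar> + \<bar>lm i\<bar>))"
  have "L1 \<ge> 0" using g_pos by (simp add: L1_def sum_nonneg less_imp_le)
  obtain KC where "KC \<ge> 0" and KC: "\<And>v. norm (C *v v) \<le> norm v * KC"
    using bounded_linear.nonneg_bounded[of "\<lambda>v. C *v v"] by (auto simp: linear_linear)
  have "\<bar>V (C *v z) - V (C *v z')\<bar> \<le> (L1 * KC) * norm (z - z')" for z z'
  proof -
    have "\<bar>V (C *v z) - V (C *v z')\<bar> \<le> L1 * norm (C *v (z - z'))"
      using output_lyapunov_lipschitz[where y = "C *v z" and y' = "C *v z'"]
      by (simp add: L1_def matrix_vector_mult_diff_distrib)
    also have "\<dots> \<le> L1 * (norm (z - z') * KC)" using KC \<open>L1 \<ge> 0\<close> by (rule mult_left_mono)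
    finally show ?thesis by (simp add: mult_ac)
  qed
  moreover have "L1 * KC \<ge> 0" using \<open>L1 \<ge> 0\<close> \<open>KC \<ge> 0\<close> by simp
  ultimately show ?thesis using that by blast
qed

lemma output_lyapunov_decay:
  assumes sol: "is_solution (lure_F A B C \<psi>) x I" and "s \<le> t" "s \<in> I" "t \<in> I"
    and small: "\<And>r. r \<in> {s..t} \<Longrightarrow> norm (x r) \<le> \<rho>"
  shows "V (C *v x t) \<le> max (V (C *v x s) - c * (t - s)) 0"
proof -
  define W where "W r = V (C *v x r)" for r
  obtain N where "negligible N" and W': "\<And>r. r \<in> interior I - N \<Longrightarrow> norm (x r) \<le> \<rho> \<Longrightarrow> C *v x r \<noteq> 0 \<Longrightarrow>
      \<exists>D. (W has_real_derivative D) (at r) \<and> D \<le> - c"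
    unfolding W_def using output_lyapunov_decreasing_along_solution[OF sol] by blast
  obtain L where "L \<ge> 0" and L: "\<And>u v. \<bar>W v - W u\<bar> \<le> L * norm (x v - x u)"
    unfolding W_def using output_lyapunov_lipschitz_output by metis
  have ac: "abs_continuous_on {a..b} x" if "{a..b} \<subseteq> I" for a b
    using sol that unfolding is_solution_def by blast
  have "{s..t} \<subseteq> I" using is_solution_segment[OF sol \<open>s \<in> I\<close> \<open>t \<in> I\<close>] .
  show ?thesis unfolding W_def[symmetric]
  proof (rule continuous_decrease_while_positive[where h = W, OF \<open>s \<le> t\<close> _ _ less_imp_le[OF rate_pos]])
    have "abs_continuous_on {s..t} W"
      by (rule abs_continuous_on_dominated[OF ac[OF \<open>{s..t} \<subseteq> I\<close>] \<open>L \<ge> 0\<close> order_refl]) (simp add: L)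
    then show "continuous_on {s..t} W" by (rule abs_continuous_on_imp_continuous_on)
    show "W r \<ge> 0" for r unfolding W_def by (rule output_lyapunov_nonneg)
    fix a b assume ab: "s \<le> a" "a \<le> b" "b \<le> t" and pos: "\<forall>r\<in>{a<..b}. W r > 0"
    have "{a..b} \<subseteq> I" using ab \<open>{s..t} \<subseteq> I\<close> by auto
    have "(\<lambda>r. W r + c * r) b \<le> (\<lambda>r. W r + c * r) a"
    proof (rule abs_continuous_on_nonpos_derivative_imp_le[where f = "\<lambda>r. W r + c * r", OF \<open>a \<le> b\<close> _ \<open>negligible N\<close>])
      show "abs_continuous_on {a..b} (\<lambda>r. W r + c * r)"
      proof (rule abs_continuous_on_dominated[OF ac[OF \<open>{a..b} \<subseteq> I\<close>] \<open>L \<ge> 0\<close> less_imp_le[OF rate_pos]])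
        fix u v :: real assume "u \<le> v"
        then have "c * (v - u) \<ge> 0" using rate_pos by simp
        have "\<bar>(W v - W u) + c * (v - u)\<bar> \<le> \<bar>W v - W u\<bar> + \<bar>c * (v - u)\<bar>" by (rule abs_triangle_ineq)
        moreover have "\<bar>W v - W u\<bar> \<le> L * norm (x v - x u)" by (rule L)
        ultimately show "norm ((W v + c * v) - (W u + c * u)) \<le> L * norm (x v - x u) + c * (v - u)"
          using \<open>c * (v - u) \<ge> 0\<close> by (simp add: algebra_simps)
      qed
      fix r assume r: "r \<in> {a<..<b} - N"
      have "{a<..<b} \<subseteq> interior I" using interior_mono[OF \<open>{a..b} \<subseteq> I\<close>] by auto
      then have "r \<in> interior I - N" using r by blast
      moreover have "norm (x r) \<le> \<rho>" using small r ab by auto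
      moreover have "C *v x r \<noteq> 0"
      proof -
        have "W r > 0" using pos r by auto
        then show ?thesis using output_lyapunov_eq_0_iff[where y = "C *v x r"] by (auto simp: W_def)
      qed
      ultimately obtain D where "(W has_real_derivative D) (at r)" "D \<le> - c" using W' by blast
      then show "\<exists>D. ((\<lambda>r. W r + c * r) has_real_derivative D) (at r) \<and> D \<le> 0"
        by (intro exI[of _ "D + c * 1"] conjI DERIV_add DERIV_cmult DERIV_ident) auto
    qed
    then show "W b \<le> W a - c * (b - a)" by (simp add: algebra_simps)
  qed
qed

end

context lure_output_lyapunov
begin

lemma OFTS_if_GAS:
  assumes GAS: "GAS (lure_F A B C \<psi>)"
  shows "OFTS (lure_F A B C \<psi>) (\<lambda>x. C *v x)"
proof -
  have "\<exists>T\<ge>0. \<forall>t\<in>I. T \<le> t \<longrightarrow> C *v x t = 0" if sol: "is_solution (lure_F A B C \<psi>) x I" for x I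
  proof -
    obtain T0 where "T0 \<ge> 0" and small: "\<And>t. t \<in> I \<Longrightarrow> T0 \<le> t \<Longrightarrow> norm (x t) < \<rho>"
      using GAS_eventually_small[OF GAS sol radius_pos] by blast
    have "0 \<in> I" using sol unfolding is_solution_def by blast
    define T where "T = T0 + V (C *v x T0) / c"
    have "T0 \<le> T" using output_lyapunov_nonneg rate_pos by (simp add: T_def)
    have "C *v x t = 0" if "t \<in> I" "T \<le> t" for t
    proof -
      have "T0 \<in> I" using is_solution_segment[OF sol \<open>0 \<in> I\<close> \<open>t \<in> I\<close>] \<open>T0 \<ge> 0\<close> \<open>T0 \<le> T\<close> that(2) by auto
      have "{T0..t} \<subseteq> I" using is_solution_segment[OF sol \<open>T0 \<in> I\<close> \<open>t \<in> I\<close>] .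
      moreover have "norm (x r) \<le> \<rho>" if "r \<in> {T0..t}" for r
        using small[of r] \<open>{T0..t} \<subseteq> I\<close> that by (auto intro: less_imp_le)
      ultimately have "V (C *v x t) \<le> max (V (C *v x T0) - c * (t - T0)) 0"
        using \<open>T0 \<le> T\<close> that(2) by (intro output_lyapunov_decay[OF sol _ \<open>T0 \<in> I\<close> \<open>t \<in> I\<close>]) auto
      moreover have "V (C *v x T0) \<le> c * (t - T0)"
        using that(2) rate_pos by (simp add: T_def field_simps)
      ultimately have "V (C *v x t) \<le> 0" by simp
      then show ?thesis
        using output_lyapunov_nonneg[where y = "C *v x t"]
          output_lyapunov_eq_0_iff[where y = "C *v x t"] by simp
    qed
    then show ?thesis using \<open>T0 \<le> T\<close> \<open>T0 \<ge> 0\<close> by (intro exI[of _ T]) auto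
  qed
  moreover have "oGAS (lure_F A B C \<psi>) (\<lambda>x. C *v x)" by (rule GAS_imp_oGAS[OF GAS]) (simp add: linear_linear)
  ultimately show ?thesis unfolding OFTS_def by blast
qed

lemma SIoLAS_if_GAS:
  assumes GAS: "GAS (lure_F A B C \<psi>)"
  shows "SIoLAS (lure_F A B C \<psi>) (\<lambda>x. C *v x)"
proof -
  obtain r where "r > 0" and small: "\<And>x I t. is_solution (lure_F A B C \<psi>) x I \<Longrightarrow> norm (x 0) < r \<Longrightarrow> t \<in> I \<Longrightarrow> norm (x t) < \<rho>"
    using GAS_small_initial[OF GAS radius_pos] by blast
  define a where "a = (MIN i. min (lp i) (- lm i))"
  have "a > 0" using lp_pos lm_neg by (simp add: a_def)
  have a: "a \<le> lp i" "a \<le> - lm i" for i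
    using Min_le[of "range (\<lambda>i. min (lp i) (- lm i))" "min (lp i) (- lm i)"] by (auto simp: a_def)
  define c1 where "c1 = (MIN i. g i) * a"
  have "c1 > 0" using g_pos \<open>a > 0\<close> by (simp add: c1_def)
  define c2 where "c2 = (\<Sum>i\<in>UNIV. g i * (\<bar>lp i\<bar> + \<bar>lm i\<bar>))"
  have "0 < g i * (\<bar>lp i\<bar> + \<bar>lm i\<bar>)" for i using g_pos[of i] lp_pos[of i] by (intro mult_pos_pos add_pos_nonneg) auto
  then have "c2 > 0" unfolding c2_def by (intro sum_pos) auto
  obtain KC where "KC \<ge> 0" and KC: "\<And>v. norm (C *v v) \<le> norm v * KC"
    using bounded_linear.nonneg_bounded[of "\<lambda>v. C *v v"] by (auto simp: linear_linear)
  define b where "b = c / (c2 * (KC + 1))"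
  have "b > 0" using rate_pos \<open>c2 > 0\<close> \<open>KC \<ge> 0\<close> by (simp add: b_def add_nonneg_pos)
  have "norm (C *v x t) \<le> c2 / c1 * norm (C *v x 0) * exp (- (b * t))"
    if sol: "is_solution (lure_F A B C \<psi>) x I" and x0: "norm (x 0) < min r 1" and "t \<in> I" for x I t
  proof -
    have "0 \<in> I" "t \<ge> 0" using sol \<open>t \<in> I\<close> unfolding is_solution_def by auto
    have "norm (C *v x 0) \<le> KC + 1"
      using KC[of "x 0"] x0 \<open>KC \<ge> 0\<close> mult_left_mono[of "norm (x 0)" 1 KC] by (simp add: mult.commute)
    have "c1 * norm (C *v x t) \<le> V (C *v x t)"
      unfolding c1_def using output_lyapunov_lower_bound[OF a less_imp_le[OF \<open>a > 0\<close>]] .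
    also have "\<dots> \<le> max (V (C *v x 0) - c * (t - 0)) 0"
    proof (rule output_lyapunov_decay[OF sol \<open>t \<ge> 0\<close> \<open>0 \<in> I\<close> \<open>t \<in> I\<close>])
      fix s assume "s \<in> {0..t}"
      then have "s \<in> I" using is_solution_segment[OF sol \<open>0 \<in> I\<close> \<open>t \<in> I\<close>] by blast
      then show "norm (x s) \<le> \<rho>" using small[OF sol] x0 by (auto intro: less_imp_le)
    qed
    also have "\<dots> \<le> max (c2 * norm (C *v x 0) - c * t) 0"
      using output_lyapunov_upper_bound[of "C *v x 0"] by (simp add: c2_def)
    also have "\<dots> \<le> c2 * norm (C *v x 0) * exp (- (b * t))"
      using linear_decay_le_exp_decay[OF \<open>c2 > 0\<close> rate_pos norm_ge_zero \<open>norm (C *v x 0) \<le> KC + 1\<close> \<open>t \<ge> 0\<close>]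
      by (simp add: b_def)
    finally show ?thesis using \<open>c1 > 0\<close> by (simp add: field_simps)
  qed
  moreover have "class_KL (\<lambda>s t. c2 / c1 * s * exp (- (b * t)))"
    using \<open>c1 > 0\<close> \<open>c2 > 0\<close> \<open>b > 0\<close> by (intro class_KL_exp_decay) auto
  moreover have "forward_complete (lure_F A B C \<psi>)" using GAS unfolding GAS_def by blast
  moreover have "min r 1 > 0" using \<open>r > 0\<close> by simp
  ultimately show ?thesis unfolding SIoLAS_def by blast
qed

end

theorem theorem2:
  fixes A :: "real^'n::finite^'n" and B :: "real^'p::finite^'n" and C :: "real^'n^'p"
    and \<psi> :: "'p \<Rightarrow> real \<Rightarrow> real"
  assumes A1_pc: "\<forall>i. piecewise_continuous (\<psi> i)"
    and A1_sector: "\<forall>i. (\<exists>\<zeta>>0. \<forall>s. \<psi> i s * (\<psi> i s - \<zeta> * s) \<le> 0) \<or> (\<forall>s. \<psi> i s * s \<ge> 0)"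
    and A3_i: "lyap_diag_stable (C ** B)"
    and A3_ii: "GAS (lure_F A B C \<psi>)"
    and A3_iii: "\<forall>i. (\<exists>l>0. (\<psi> i \<longlongrightarrow> l) (at_right 0)) \<and> (\<exists>l<0. (\<psi> i \<longlongrightarrow> l) (at_left 0))"
  shows "OFTS (lure_F A B C \<psi>) (\<lambda>x. C *v x) \<and> SIoLAS (lure_F A B C \<psi>) (\<lambda>x. C *v x)"
proof -
  have "\<forall>i. \<exists>l. (\<psi> i \<longlongrightarrow> l) (at_right 0) \<and> l > 0" using A3_iii by blast
  from choice[OF this] obtain lp where "\<forall>i. (\<psi> i \<longlongrightarrow> lp i) (at_right 0) \<and> lp i > 0" by blast
  then have lp: "\<And>i. (\<psi> i \<longlongrightarrow> lp i) (at_right 0)" "\<And>i. lp i > 0" by blast+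
  have "\<forall>i. \<exists>l. (\<psi> i \<longlongrightarrow> l) (at_left 0) \<and> l < 0" using A3_iii by blast
  from choice[OF this] obtain lm where "\<forall>i. (\<psi> i \<longlongrightarrow> lm i) (at_left 0) \<and> lm i < 0" by blast
  then have lm: "\<And>i. (\<psi> i \<longlongrightarrow> lm i) (at_left 0)" "\<And>i. lm i < 0" by blast+
  obtain g \<rho> c where "lure_output_lyapunov g lp lm A B C \<psi> \<rho> c"
    using lure_output_lyapunov_exists[where \<psi> = \<psi> and lp = lp and lm = lm, OF A3_i lp lm] by blast
  then show ?thesis
    using lure_output_lyapunov.OFTS_if_GAS lure_output_lyapunov.SIoLAS_if_GAS A3_ii by blast
qed

end
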